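(* Let $W:[0,1]^2\to[0,1]$ be a Hölder-by-parts graphon whose integral operator has a finite number $m_W$ of distinct nonzero eigenvalues. Then there exists a vector $\beta^{*,m_W}=(\beta^{*,m_W}_1,\dots,\beta^{*,m_W}_{m_W})\in\mathbb R^{m_W}$ such that for all $(x,y)\in[0,1]^2$, $$W(x,y)=\sum_{i=1}^{m_W}\beta_i^{*,m_W}\,W^{(i+1)}(x,y).$$
   Context: A graphon is a symmetric measurable $W:[0,1]^2\to[0,1]$. Hölder-by-parts: there is a finite partition $\mathcal Q$ of $[0,1]$ into pairwise disjoint connected sets $Q$ with $\mu(\mathrm{int}(Q))>0$ and $\mu(\mathrm{cl}(Q)\setminus\mathrm{int}(Q))=0$ ($\mu$ Lebesgue measure) and constants $\beta,M$ such that $W$ is $(\beta,M)$-Hölder on each $Q_a\times Q_b$. The integral operator is $T_W[f](x)=\int_0^1W(x,y)f(y)dy$ on $L^2([0,1])$; it is compact self-adjoint and $W(x,y)=\sum_i\mu_i\phi_i(x)\phi_i(y)$ with eigenvalues $\mu_i$ and orthonormal eigenfunctions $\phi_i$. $m_W$ (the distinct rank) is the number of distinct nonzero eigenvalues. Moments: $W^{(k)}(x,y)=\int_{[0,1]^{k-1}}W(x,t_1)W(t_1,t_2)\cdots W(t_{k-1},y)\,dt_1\cdots dt_{k-1}$. *)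

theory Defs
  imports "HOL-Analysis.Analysis"
begin

definition graphon :: "(real \<Rightarrow> real \<Rightarrow> real) \<Rightarrow> bool" where
  "graphon W \<longleftrightarrow>
     (\<forall>x\<in>{0..1}. \<forall>y\<in>{0..1}. W x y = W y x \<and> 0 \<le> W x y \<and> W x y \<le> 1) \<and>
     case_prod W \<in> borel_measurable (restrict_space (lborel \<Otimes>\<^sub>M lborel) ({0..1} \<times> {0..1}))"

definition holder_on :: "real \<Rightarrow> real \<Rightarrow> (real \<times> real) set \<Rightarrow> (real \<Rightarrow> real \<Rightarrow> real) \<Rightarrow> bool" where
  "holder_on \<beta> M S W \<longleftrightarrow>
     (\<forall>p\<in>S. \<forall>q\<in>S. \<bar>case_prod W p - case_prod W q\<bar> \<le> M * (dist p q) powr \<beta>)"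

definition holder_by_parts :: "(real \<Rightarrow> real \<Rightarrow> real) \<Rightarrow> bool" where
  "holder_by_parts W \<longleftrightarrow>
     (\<exists>\<Q> \<beta> M. finite \<Q> \<and> \<Union>\<Q> = {0..1} \<and> pairwise disjnt \<Q> \<and>
        (\<forall>Q\<in>\<Q>. connected Q \<and> emeasure lborel (interior Q) > 0 \<and>
                 emeasure lborel (closure Q - interior Q) = 0) \<and>
        \<beta> > 0 \<and>
        (\<forall>Qa\<in>\<Q>. \<forall>Qb\<in>\<Q>. holder_on \<beta> M (Qa \<times> Qb) W))"

definition graphon_eigenvalues :: "(real \<Rightarrow> real \<Rightarrow> real) \<Rightarrow> real set" where
  "graphon_eigenvalues W = {\<mu>. \<mu> \<noteq> 0 \<and>
     (\<exists>f :: real \<Rightarrow> real. f \<in> borel_measurable lborel \<and>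
        set_integrable lborel {0..1} (\<lambda>y. (f y)\<^sup>2) \<and>
        \<not> (AE x in lborel. x \<in> {0..1} \<longrightarrow> f x = 0) \<and>
        (AE x in lborel. x \<in> {0..1} \<longrightarrow>
            (LINT y:{0..1}|lborel. W x y * f y) = \<mu> * f x))}"

definition distinct_rank :: "(real \<Rightarrow> real \<Rightarrow> real) \<Rightarrow> nat" where
  "distinct_rank W = card (graphon_eigenvalues W)"

text \<open>Moments W^(k), k \<ge> 1, defined by iterated integration:
  W^(1) = W and W^(k+1)(x,y) = int_0^1 W(x,t) W^(k)(t,y) dt
  (equal, by Fubini, to the (k-1)-fold integral over [0,1]^(k-1)).
  The value for k = 0 is an unused convention.\<close>
fun graphon_moment :: "(real \<Rightarrow> real \<Rightarrow> real) \<Rightarrow> nat \<Rightarrow> real \<Rightarrow> real \<Rightarrow> real" where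
  "graphon_moment W 0 = (\<lambda>x y. 0)"
| "graphon_moment W (Suc 0) = W"
| "graphon_moment W (Suc (Suc k)) =
     (\<lambda>x y. LINT t:{0..1}|lborel. W x t * graphon_moment W (Suc k) t y)"

end

theory Submission
  imports Defs "HOL-Complex_Analysis.Great_Picard" "HOL-Computational_Algebra.Polynomial"
begin

text \<open>Let \<open>E\<close> be the finite set of nonzero eigenvalues of the integral operator \<open>T\<close> of \<open>W\<close>
  and \<open>p(z) = \<Prod>\<mu>\<in>E. (z - \<mu>)\<close>. The operator \<open>S = T p(T)\<close> is compact and self-adjoint. If it
  were nonzero, it would have an eigenvalue \<open>\<lambda> \<noteq> 0\<close>; its eigenspace is invariant under \<open>T\<close>,
  and \<open>T\<close> is nonzero there, so it has an eigenvector \<open>h\<close> in it with an eigenvalue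
  \<open>\<nu> \<noteq> 0\<close>. Then \<open>\<nu> \<in> E\<close>, hence \<open>S h = \<nu> p(\<nu>) h = 0\<close>, contradicting \<open>S h = \<lambda> h\<close>.
  So \<open>S = 0\<close>. Now \<open>S\<close> is the integral operator with kernel \<open>\<Sum>\<^sub>k a\<^sub>k W^(k+1)\<close>,
  \<open>a\<^sub>k\<close> the coefficients of \<open>p\<close>. Hoelder continuity on the parts of the partition upgrades the
  almost-everywhere vanishing of this kernel to vanishing everywhere on \<open>[0,1]\<^sup>2\<close>, and since
  \<open>a\<^sub>0 = p(0) \<noteq> 0\<close> the identity can be solved for \<open>W\<close>.\<close>

section \<open>Square-integrable functions on the unit interval\<close>

text \<open>Elements of \<open>L\<^sup>2[0,1]\<close> are represented by Borel functions on the real line that vanish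
  outside \<open>[0,1]\<close>. Since \<open>norm_L2\<close> is only a seminorm, equality in \<open>L\<^sup>2\<close> is expressed as
  \<open>norm_L2 (\<lambda>x. f x - g x) = 0\<close>.\<close>

definition L2_unit :: "(real \<Rightarrow> real) \<Rightarrow> bool" where
  "L2_unit f \<longleftrightarrow> f \<in> borel_measurable lborel \<and> integrable lborel (\<lambda>x. (f x)\<^sup>2) \<and>
     (\<forall>x. x \<notin> {0..1} \<longrightarrow> f x = 0)"

definition inner_L2 :: "(real \<Rightarrow> real) \<Rightarrow> (real \<Rightarrow> real) \<Rightarrow> real" where
  "inner_L2 f g = (\<integral>x. f x * g x \<partial>lborel)"

definition norm_L2 :: "(real \<Rightarrow> real) \<Rightarrow> real" where
  "norm_L2 f = sqrt (inner_L2 f f)"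

lemma L2_unitD:
  assumes "L2_unit f"
  shows "f \<in> borel_measurable lborel" "integrable lborel (\<lambda>x. (f x)\<^sup>2)"
    "\<And>x. x \<notin> {0..1} \<Longrightarrow> f x = 0"
  using assms unfolding L2_unit_def by auto

lemma L2_unit_lin [intro]:
  assumes "L2_unit f" "L2_unit g"
  shows "L2_unit (\<lambda>x. c * f x + d * g x)"
proof -
  have m: "(\<lambda>x. c * f x + d * g x) \<in> borel_measurable lborel"
    using L2_unitD(1)[OF assms(1)] L2_unitD(1)[OF assms(2)] by measurable
  have "integrable lborel (\<lambda>x. (c * f x + d * g x)\<^sup>2)"
  proof (rule Bochner_Integration.integrable_bound)
    show "integrable lborel (\<lambda>x. 2 * c\<^sup>2 * (f x)\<^sup>2 + 2 * d\<^sup>2 * (g x)\<^sup>2)"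
      using L2_unitD(2)[OF assms(1)] L2_unitD(2)[OF assms(2)] by auto
    show "(\<lambda>x. (c * f x + d * g x)\<^sup>2) \<in> borel_measurable lborel" using m by measurable
    have "(c * f x + d * g x)\<^sup>2 \<le> 2 * c\<^sup>2 * (f x)\<^sup>2 + 2 * d\<^sup>2 * (g x)\<^sup>2" for x
    proof -
      have "2 * c\<^sup>2 * (f x)\<^sup>2 + 2 * d\<^sup>2 * (g x)\<^sup>2 - (c * f x + d * g x)\<^sup>2 = (c * f x - d * g x)\<^sup>2"
        by (simp add: power2_eq_square algebra_simps)
      then show ?thesis by (metis diff_ge_0_iff_ge zero_le_power2)
    qed
    then show "AE x in lborel. norm ((c * f x + d * g x)\<^sup>2)
        \<le> norm (2 * c\<^sup>2 * (f x)\<^sup>2 + 2 * d\<^sup>2 * (g x)\<^sup>2)"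
      by (simp add: order_trans[OF _ abs_ge_self])
  qed
  then show ?thesis using m L2_unitD(3)[OF assms(1)] L2_unitD(3)[OF assms(2)]
    unfolding L2_unit_def by auto
qed

lemma L2_unit_zero: "L2_unit (\<lambda>x. 0)"
  unfolding L2_unit_def by auto

lemma L2_unit_scale [intro]: "L2_unit f \<Longrightarrow> L2_unit (\<lambda>x. c * f x)"
  using L2_unit_lin[of f f c 0] by simp

lemma L2_unit_diff [intro]: "L2_unit f \<Longrightarrow> L2_unit g \<Longrightarrow> L2_unit (\<lambda>x. f x - g x)"
  using L2_unit_lin[of f g 1 "-1"] by simp

lemma L2_unit_sum [intro]:
  "finite I \<Longrightarrow> (\<And>i. i \<in> I \<Longrightarrow> L2_unit (u i)) \<Longrightarrow> L2_unit (\<lambda>x. \<Sum>i\<in>I. u i x)"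
  by (induction I rule: finite_induct) (use L2_unit_zero L2_unit_lin[of _ _ 1 1] in auto)

lemma L2_unit_abs [intro]: "L2_unit f \<Longrightarrow> L2_unit (\<lambda>x. \<bar>f x\<bar>)"
  unfolding L2_unit_def by (auto simp: power2_abs)

lemma indicator_power2: "(indicator A x :: real)\<^sup>2 = indicator A x"
  by (simp add: indicator_def)

lemma L2_unit_indicator: "L2_unit (indicator {0..1})"
  unfolding L2_unit_def indicator_power2 by auto

lemma L2_unit_bounded:
  assumes "g \<in> borel_measurable lborel" "\<And>x. \<bar>g x\<bar> \<le> B" "\<And>x. x \<notin> {0..1} \<Longrightarrow> g x = 0"
  shows "L2_unit g"
proof -
  have bound: "(g x)\<^sup>2 \<le> B\<^sup>2 * indicator {0..1} x" for x
  proof (cases "x \<in> {0..1}")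
    case True
    have "\<bar>g x\<bar>\<^sup>2 \<le> B\<^sup>2" by (rule power_mono) (use assms(2)[of x] in auto)
    then show ?thesis using True by simp
  qed (use assms(3) in simp)
  have "integrable lborel (\<lambda>x. (g x)\<^sup>2)"
  proof (rule Bochner_Integration.integrable_bound)
    show "integrable lborel (\<lambda>x. B\<^sup>2 * indicator {0..1::real} x)" by simp
    show "(\<lambda>x. (g x)\<^sup>2) \<in> borel_measurable lborel" using assms(1) by measurable
  qed (use bound in simp)
  then show ?thesis unfolding L2_unit_def using assms by auto
qed

lemma L2_unit_integrable_mult:
  assumes "L2_unit f" "L2_unit g"
  shows "integrable lborel (\<lambda>x. f x * g x)"
proof (rule Bochner_Integration.integrable_bound[of _ "\<lambda>x. (f x)\<^sup>2 + (g x)\<^sup>2"])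
  show "integrable lborel (\<lambda>x. (f x)\<^sup>2 + (g x)\<^sup>2)"
    using L2_unitD(2)[OF assms(1)] L2_unitD(2)[OF assms(2)] by auto
  show "(\<lambda>x. f x * g x) \<in> borel_measurable lborel"
    using L2_unitD(1)[OF assms(1)] L2_unitD(1)[OF assms(2)] by measurable
  have "\<bar>f x * g x\<bar> \<le> (f x)\<^sup>2 + (g x)\<^sup>2" for x
    using sum_squares_bound[of "f x" "g x"] sum_squares_bound[of "f x" "- g x"]
    by (simp add: abs_le_iff)
  then show "AE x in lborel. norm (f x * g x) \<le> norm ((f x)\<^sup>2 + (g x)\<^sup>2)" by simp
qed

lemma L2_unit_integrable:
  assumes "L2_unit f" shows "integrable lborel f"
proof -
  have "(\<lambda>x. f x * indicator {0..1} x) = f"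
    using L2_unitD(3)[OF assms] by (auto simp: indicator_def fun_eq_iff)
  then show ?thesis using L2_unit_integrable_mult[OF assms L2_unit_indicator] by simp
qed

lemma inner_L2_commute: "inner_L2 f g = inner_L2 g f"
  unfolding inner_L2_def by (simp add: mult.commute)

lemma inner_L2_nonneg: "inner_L2 f f \<ge> 0"
  unfolding inner_L2_def by simp

lemma inner_L2_lin:
  assumes "L2_unit f" "L2_unit g" "L2_unit h"
  shows "inner_L2 (\<lambda>x. c * f x + d * g x) h = c * inner_L2 f h + d * inner_L2 g h"
  unfolding inner_L2_def
  using L2_unit_integrable_mult[OF assms(1,3)] L2_unit_integrable_mult[OF assms(2,3)]
  by (simp add: algebra_simps)

lemma inner_L2_sum:
  assumes "finite I" "\<And>i. i \<in> I \<Longrightarrow> L2_unit (u i)" "L2_unit g"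
  shows "inner_L2 (\<lambda>x. \<Sum>i\<in>I. c i * u i x) g = (\<Sum>i\<in>I. c i * inner_L2 (u i) g)"
  using assms(1,2)
proof (induction I rule: finite_induct)
  case (insert j I)
  have "L2_unit (\<lambda>x. \<Sum>i\<in>I. c i * u i x)" using insert by (intro L2_unit_sum L2_unit_scale) auto
  then show ?case
    using inner_L2_lin[of "u j" _ g "c j" 1] insert assms(3) by simp
qed (simp add: inner_L2_def)

lemma inner_L2_diff_self:
  assumes "L2_unit f" "L2_unit g"
  shows "inner_L2 (\<lambda>x. f x - c * g x) (\<lambda>x. f x - c * g x)
    = inner_L2 f f - 2 * c * inner_L2 f g + c\<^sup>2 * inner_L2 g g"
proof -
  have "inner_L2 (\<lambda>x. f x - c * g x) (\<lambda>x. f x - c * g x)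
      = (\<integral>x. f x * f x + (- 2 * c) * (f x * g x) + c\<^sup>2 * (g x * g x) \<partial>lborel)"
    unfolding inner_L2_def
    by (rule Bochner_Integration.integral_cong) (auto simp: algebra_simps power2_eq_square)
  then show ?thesis
    unfolding inner_L2_def using L2_unit_integrable_mult[OF assms(1,1)]
      L2_unit_integrable_mult[OF assms(1,2)] L2_unit_integrable_mult[OF assms(2,2)] by simp
qed

lemma norm_L2_nonneg: "norm_L2 f \<ge> 0"
  unfolding norm_L2_def using inner_L2_nonneg by simp

lemma norm_L2_power2: "(norm_L2 f)\<^sup>2 = inner_L2 f f"
  unfolding norm_L2_def using inner_L2_nonneg by simp

lemma inner_L2_cauchy_schwarz:
  assumes "L2_unit f" "L2_unit g"
  shows "\<bar>inner_L2 f g\<bar> \<le> norm_L2 f * norm_L2 g"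
proof -
  have Q: "0 \<le> inner_L2 f f - 2 * c * inner_L2 f g + c\<^sup>2 * inner_L2 g g" for c
    using inner_L2_diff_self[OF assms, of c] inner_L2_nonneg[of "\<lambda>x. f x - c * g x"] by simp
  have "(inner_L2 f g)\<^sup>2 \<le> inner_L2 f f * inner_L2 g g"
  proof (cases "inner_L2 g g = 0")
    case True
    have "inner_L2 f g = 0"
    proof (rule ccontr)
      assume ne: "inner_L2 f g \<noteq> 0"
      have "0 \<le> inner_L2 f f - 2 * ((inner_L2 f f + 1) / (2 * inner_L2 f g)) * inner_L2 f g"
        using Q[of "(inner_L2 f f + 1) / (2 * inner_L2 f g)"] True by simp
      also have "\<dots> = -1" using ne by (simp add: field_simps)
      finally show False by simp
    qed
    then show ?thesis by (simp add: inner_L2_nonneg)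
  next
    case False
    then have pos: "inner_L2 g g > 0" using inner_L2_nonneg[of g] by simp
    have "0 \<le> inner_L2 f f - 2 * (inner_L2 f g / inner_L2 g g) * inner_L2 f g
        + (inner_L2 f g / inner_L2 g g)\<^sup>2 * inner_L2 g g"
      using Q by blast
    also have "\<dots> = inner_L2 f f - (inner_L2 f g)\<^sup>2 / inner_L2 g g"
      using pos by (simp add: field_simps power2_eq_square)
    finally show ?thesis using pos by (simp add: field_simps)
  qed
  then have "sqrt ((inner_L2 f g)\<^sup>2) \<le> sqrt (inner_L2 f f * inner_L2 g g)"
    by (rule real_sqrt_le_mono)
  then show ?thesis unfolding norm_L2_def by (simp add: real_sqrt_mult)
qed

lemma norm_L2_lin:
  assumes "L2_unit f" "L2_unit g"
  shows "norm_L2 (\<lambda>x. c * f x + d * g x) \<le> \<bar>c\<bar> * norm_L2 f + \<bar>d\<bar> * norm_L2 g"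
proof -
  have cs: "c * d * inner_L2 f g \<le> \<bar>c\<bar> * \<bar>d\<bar> * (norm_L2 f * norm_L2 g)"
    using mult_left_mono[OF inner_L2_cauchy_schwarz[OF assms], of "\<bar>c\<bar> * \<bar>d\<bar>"]
      abs_ge_self[of "c * d * inner_L2 f g"] by (simp add: abs_mult)
  have lin: "inner_L2 (\<lambda>x. c * f x + d * g x) h = c * inner_L2 f h + d * inner_L2 g h"
    if "L2_unit h" for h
    using inner_L2_lin[OF assms that] .
  have "(norm_L2 (\<lambda>x. c * f x + d * g x))\<^sup>2
      = c * inner_L2 f (\<lambda>x. c * f x + d * g x) + d * inner_L2 g (\<lambda>x. c * f x + d * g x)"
    unfolding norm_L2_power2 using lin[of "\<lambda>x. c * f x + d * g x"] assms by auto
  also have "\<dots> = c\<^sup>2 * inner_L2 f f + 2 * (c * d * inner_L2 f g) + d\<^sup>2 * inner_L2 g g"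
    using lin[OF assms(1)] lin[OF assms(2)] inner_L2_commute[of g f]
      inner_L2_commute[of f "\<lambda>x. c * f x + d * g x"] inner_L2_commute[of g "\<lambda>x. c * f x + d * g x"]
    by (simp add: power2_eq_square algebra_simps)
  also have "\<dots> \<le> (\<bar>c\<bar> * norm_L2 f + \<bar>d\<bar> * norm_L2 g)\<^sup>2"
    using cs by (simp add: power2_sum power_mult_distrib norm_L2_power2 algebra_simps)
  finally have "(norm_L2 (\<lambda>x. c * f x + d * g x))\<^sup>2 \<le> (\<bar>c\<bar> * norm_L2 f + \<bar>d\<bar> * norm_L2 g)\<^sup>2" .
  then show ?thesis
    by (rule power2_le_imp_le) (simp add: norm_L2_nonneg)
qed

lemma norm_L2_scale: "norm_L2 (\<lambda>x. c * f x) = \<bar>c\<bar> * norm_L2 f"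
proof -
  have "inner_L2 (\<lambda>x. c * f x) (\<lambda>x. c * f x) = c\<^sup>2 * inner_L2 f f"
    unfolding inner_L2_def by (simp add: power2_eq_square algebra_simps)
  then show ?thesis unfolding norm_L2_def by (simp add: real_sqrt_mult)
qed

lemma norm_L2_minus_commute: "norm_L2 (\<lambda>x. f x - g x) = norm_L2 (\<lambda>x. g x - f x)"
  using norm_L2_scale[of "-1" "\<lambda>x. f x - g x"] by simp

lemma norm_L2_diff: "L2_unit f \<Longrightarrow> L2_unit g \<Longrightarrow> norm_L2 (\<lambda>x. f x - g x) \<le> norm_L2 f + norm_L2 g"
  using norm_L2_lin[of f g 1 "-1"] by simp

lemma norm_L2_triangle:
  assumes "L2_unit f" "L2_unit g" "L2_unit h"
  shows "norm_L2 (\<lambda>x. f x - h x) \<le> norm_L2 (\<lambda>x. f x - g x) + norm_L2 (\<lambda>x. g x - h x)"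
  using norm_L2_lin[of "\<lambda>x. f x - g x" "\<lambda>x. g x - h x" 1 1] assms by auto

lemma norm_L2_tendsto_transfer:
  assumes "\<And>n. L2_unit (a n)" "\<And>n. L2_unit (b n)" "L2_unit h"
    and "(\<lambda>n. norm_L2 (\<lambda>x. a n x - b n x)) \<longlonglongrightarrow> 0" "(\<lambda>n. norm_L2 (\<lambda>x. a n x - h x)) \<longlonglongrightarrow> 0"
  shows "(\<lambda>n. norm_L2 (\<lambda>x. b n x - h x)) \<longlonglongrightarrow> 0"
proof (rule tendsto_sandwich[of "\<lambda>n. 0" _ _ "\<lambda>n. norm_L2 (\<lambda>x. a n x - b n x) + norm_L2 (\<lambda>x. a n x - h x)"])
  show "\<forall>\<^sub>F n in sequentially. norm_L2 (\<lambda>x. b n x - h x)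
      \<le> norm_L2 (\<lambda>x. a n x - b n x) + norm_L2 (\<lambda>x. a n x - h x)"
    using norm_L2_triangle[OF assms(2) assms(1) assms(3)] norm_L2_minus_commute[of "b _" "a _"] by simp
qed (use assms(4,5) tendsto_add[OF assms(4,5)] norm_L2_nonneg in auto)

lemma norm_L2_lin3:
  assumes "L2_unit f" "L2_unit g" "L2_unit h"
  shows "norm_L2 (\<lambda>x. a * f x + b * g x + c * h x)
    \<le> \<bar>a\<bar> * norm_L2 f + \<bar>b\<bar> * norm_L2 g + \<bar>c\<bar> * norm_L2 h"
proof -
  have "norm_L2 (\<lambda>x. 1 * (a * f x + b * g x) + c * h x)
      \<le> \<bar>1\<bar> * norm_L2 (\<lambda>x. a * f x + b * g x) + \<bar>c\<bar> * norm_L2 h"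
    using assms by (intro norm_L2_lin) auto
  then show ?thesis using norm_L2_lin[OF assms(1,2), of a b] by simp
qed

lemma norm_L2_sum:
  assumes "finite I" "\<And>i. i \<in> I \<Longrightarrow> L2_unit (u i)"
  shows "norm_L2 (\<lambda>x. \<Sum>i\<in>I. c i * u i x) \<le> (\<Sum>i\<in>I. \<bar>c i\<bar> * norm_L2 (u i))"
  using assms
proof (induction I rule: finite_induct)
  case (insert j I)
  have "L2_unit (\<lambda>x. \<Sum>i\<in>I. c i * u i x)" using insert by (intro L2_unit_sum L2_unit_scale) auto
  then show ?case
    using norm_L2_lin[of "u j" _ "c j" 1] insert by fastforce
qed (simp add: norm_L2_def inner_L2_def)

lemma norm_L2_tendsto_zero_le:
  assumes "\<And>n. norm_L2 (F n) \<le> b n" "b \<longlonglongrightarrow> 0"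
  shows "(\<lambda>n. norm_L2 (F n)) \<longlonglongrightarrow> 0"
  by (rule tendsto_sandwich[of "\<lambda>n. 0" _ _ b]) (use assms norm_L2_nonneg in auto)

lemma norm_L2_eq_zero_le_tendsto:
  assumes "\<And>n. norm_L2 f \<le> b n" "b \<longlonglongrightarrow> 0"
  shows "norm_L2 f = 0"
  using LIMSEQ_le_const[OF assms(2), of "norm_L2 f"] assms(1) norm_L2_nonneg[of f] by auto

lemma norm_L2_eq_0_iff_AE:
  assumes "L2_unit f"
  shows "norm_L2 f = 0 \<longleftrightarrow> (AE x in lborel. f x = 0)"
proof -
  have "norm_L2 f = 0 \<longleftrightarrow> integral\<^sup>L lborel (\<lambda>x. (f x)\<^sup>2) = 0"
    unfolding norm_L2_def inner_L2_def using inner_L2_nonneg[of f]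
    by (simp add: power2_eq_square inner_L2_def)
  also have "\<dots> \<longleftrightarrow> (AE x in lborel. f x = 0)"
    using integral_nonneg_eq_0_iff_AE[OF L2_unitD(2)[OF assms]] by simp
  finally show ?thesis .
qed

lemma integral_abs_le_norm_L2:
  assumes "L2_unit f"
  shows "(\<integral>x. \<bar>f x\<bar> \<partial>lborel) \<le> norm_L2 f"
proof -
  have "norm_L2 (indicator {0..1}) = 1"
    unfolding norm_L2_def inner_L2_def by (simp flip: power2_eq_square add: indicator_power2)
  moreover have "inner_L2 (\<lambda>x. \<bar>f x\<bar>) (indicator {0..1}) = (\<integral>x. \<bar>f x\<bar> \<partial>lborel)"
    unfolding inner_L2_def using L2_unitD(3)[OF assms]
    by (intro Bochner_Integration.integral_cong) (auto simp: indicator_def)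
  moreover have "norm_L2 (\<lambda>x. \<bar>f x\<bar>) = norm_L2 f"
    unfolding norm_L2_def inner_L2_def by (simp add: abs_mult_self_eq)
  ultimately show ?thesis
    using inner_L2_cauchy_schwarz[OF L2_unit_abs[OF assms] L2_unit_indicator] by simp
qed

lemma norm_L2_le_bound:
  assumes "L2_unit g" "\<And>x. x \<in> {0..1} \<Longrightarrow> \<bar>g x\<bar> \<le> e"
  shows "norm_L2 g \<le> e"
proof -
  have e: "e \<ge> 0" using assms(2)[of 0] by simp
  have "(g x)\<^sup>2 \<le> e\<^sup>2 * indicator {0..1} x" for x
  proof (cases "x \<in> {0..1}")
    case True
    have "\<bar>g x\<bar>\<^sup>2 \<le> e\<^sup>2" by (rule power_mono) (use assms(2)[OF True] in auto)
    then show ?thesis using True by simp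
  qed (use L2_unitD(3)[OF assms(1)] in simp)
  then have "inner_L2 g g \<le> (\<integral>x. e\<^sup>2 * indicator {0..1::real} x \<partial>lborel)"
    unfolding inner_L2_def using L2_unitD(2)[OF assms(1)]
    by (intro Bochner_Integration.integral_mono) (auto simp: power2_eq_square)
  then have "(norm_L2 g)\<^sup>2 \<le> e\<^sup>2" by (simp add: norm_L2_power2)
  then show ?thesis using e by (rule power2_le_imp_le)
qed

lemma norm_L2_zero_if_eigen_zero:
  assumes "L2_unit u" "L2_unit g" "norm_L2 u = 0" "norm_L2 (\<lambda>x. u x - c * g x) = 0" "c \<noteq> 0"
  shows "norm_L2 g = 0"
proof -
  have "\<bar>c\<bar> * norm_L2 g = norm_L2 (\<lambda>x. u x - (u x - c * g x))"
    by (simp add: norm_L2_scale)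
  also have "\<dots> \<le> norm_L2 u + norm_L2 (\<lambda>x. u x - c * g x)"
    using assms(1,2) by (intro norm_L2_diff) auto
  finally show ?thesis using assms(3-5) norm_L2_nonneg[of g] by (simp add: mult_le_0_iff)
qed

section \<open>Compact self-adjoint operators\<close>

locale closed_L2_subspace =
  fixes V :: "(real \<Rightarrow> real) set"
  assumes subspace_L2: "f \<in> V \<Longrightarrow> L2_unit f"
    and subspace_lin: "f \<in> V \<Longrightarrow> g \<in> V \<Longrightarrow> (\<lambda>x. c * f x + d * g x) \<in> V"
    and subspace_closed: "(\<And>n. F n \<in> V) \<Longrightarrow> L2_unit h \<Longrightarrow>
      (\<lambda>n. norm_L2 (\<lambda>x. F n x - h x)) \<longlonglongrightarrow> 0 \<Longrightarrow> h \<in> V"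
begin

lemma subspace_scale: "f \<in> V \<Longrightarrow> (\<lambda>x. c * f x) \<in> V"
  using subspace_lin[of f f c 0] by simp

end

lemma closed_L2_subspace_UNIV: "closed_L2_subspace {f. L2_unit f}"
  by unfold_locales auto

locale bounded_linear_L2_op = closed_L2_subspace V for V +
  fixes A :: "(real \<Rightarrow> real) \<Rightarrow> real \<Rightarrow> real" and C :: real
  assumes maps_into: "f \<in> V \<Longrightarrow> A f \<in> V"
    and linear: "f \<in> V \<Longrightarrow> g \<in> V \<Longrightarrow> A (\<lambda>x. c * f x + d * g x) = (\<lambda>x. c * A f x + d * A g x)"
    and bounded: "f \<in> V \<Longrightarrow> norm_L2 (A f) \<le> C * norm_L2 f"
    and bound_nonneg: "C \<ge> 0"
begin

lemma op_scale: "f \<in> V \<Longrightarrow> A (\<lambda>x. c * f x) = (\<lambda>x. c * A f x)"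
  using linear[of f f c 0] by simp

lemma op_diff: "f \<in> V \<Longrightarrow> g \<in> V \<Longrightarrow> A (\<lambda>x. f x - g x) = (\<lambda>x. A f x - A g x)"
  using linear[of f g 1 "-1"] by simp

lemma norm_op_diff_le:
  "f \<in> V \<Longrightarrow> g \<in> V \<Longrightarrow> norm_L2 (\<lambda>x. A f x - A g x) \<le> C * norm_L2 (\<lambda>x. f x - g x)"
  using bounded[of "\<lambda>x. f x - g x"] subspace_lin[of f g 1 "-1"] by (simp add: op_diff)

lemma eigen_limit:
  assumes "\<And>n. F n \<in> V" "h \<in> V"
    and "(\<lambda>n. norm_L2 (\<lambda>x. F n x - h x)) \<longlonglongrightarrow> 0"
    and "(\<lambda>n. norm_L2 (\<lambda>x. A (F n) x - c * F n x)) \<longlonglongrightarrow> 0"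
  shows "norm_L2 (\<lambda>x. A h x - c * h x) = 0"
proof (rule norm_L2_eq_zero_le_tendsto)
  have L2: "L2_unit (F n)" "L2_unit h" "L2_unit (A (F n))" "L2_unit (A h)" for n
    using assms(1,2) subspace_L2 maps_into by auto
  show "norm_L2 (\<lambda>x. A h x - c * h x) \<le> (C + \<bar>c\<bar>) * norm_L2 (\<lambda>x. F n x - h x)
      + norm_L2 (\<lambda>x. A (F n) x - c * F n x)" for n
  proof -
    have "norm_L2 (\<lambda>x. A h x - c * h x) = norm_L2 (\<lambda>x. 1 * (A h x - A (F n) x)
        + 1 * (A (F n) x - c * F n x) + c * (F n x - h x))"
      by (rule arg_cong[where f = norm_L2]) (auto simp: algebra_simps)
    also have "\<dots> \<le> \<bar>1\<bar> * norm_L2 (\<lambda>x. A h x - A (F n) x)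
        + \<bar>1\<bar> * norm_L2 (\<lambda>x. A (F n) x - c * F n x) + \<bar>c\<bar> * norm_L2 (\<lambda>x. F n x - h x)"
      by (rule norm_L2_lin3) (use L2 in \<open>auto intro!: L2_unit_diff L2_unit_scale\<close>)
    also have "norm_L2 (\<lambda>x. A h x - A (F n) x) \<le> C * norm_L2 (\<lambda>x. F n x - h x)"
      using norm_op_diff_le[OF assms(2) assms(1)[of n]] norm_L2_minus_commute[of h "F n"] by simp
    finally show ?thesis by (simp add: algebra_simps)
  qed
  show "(\<lambda>n. (C + \<bar>c\<bar>) * norm_L2 (\<lambda>x. F n x - h x) + norm_L2 (\<lambda>x. A (F n) x - c * F n x))
      \<longlonglongrightarrow> 0"
    using tendsto_add[OF tendsto_mult_right_zero[OF assms(3)] assms(4)] by simp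
qed

lemma eigenspace_closed_L2_subspace:
  "closed_L2_subspace {f \<in> V. norm_L2 (\<lambda>x. A f x - c * f x) = 0}"
proof
  fix f g a b assume "f \<in> {f \<in> V. norm_L2 (\<lambda>x. A f x - c * f x) = 0}"
    "g \<in> {f \<in> V. norm_L2 (\<lambda>x. A f x - c * f x) = 0}"
  then have f: "f \<in> V" "norm_L2 (\<lambda>x. A f x - c * f x) = 0"
    and g: "g \<in> V" "norm_L2 (\<lambda>x. A g x - c * g x) = 0" by auto
  have "(\<lambda>x. A (\<lambda>x. a * f x + b * g x) x - c * (a * f x + b * g x))
      = (\<lambda>x. a * (A f x - c * f x) + b * (A g x - c * g x))"
    using linear[OF f(1) g(1)] by (auto simp: algebra_simps)
  moreover have L: "L2_unit (\<lambda>x. A k x - c * k x)" if "k \<in> V" for k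
    using subspace_L2[OF maps_into[OF that]] subspace_L2[OF that] by auto
  ultimately have "norm_L2 (\<lambda>x. A (\<lambda>x. a * f x + b * g x) x - c * (a * f x + b * g x)) \<le> 0"
    using norm_L2_lin[OF L[OF f(1)] L[OF g(1)], of a b] f(2) g(2) by simp
  then show "(\<lambda>x. a * f x + b * g x) \<in> {f \<in> V. norm_L2 (\<lambda>x. A f x - c * f x) = 0}"
    using subspace_lin[OF f(1) g(1)] norm_L2_nonneg by (auto intro: antisym)
next
  fix F h assume F: "\<And>n. F n \<in> {f \<in> V. norm_L2 (\<lambda>x. A f x - c * f x) = 0}" and "L2_unit h"
    and lim: "(\<lambda>n. norm_L2 (\<lambda>x. F n x - h x)) \<longlonglongrightarrow> 0"
  then have "h \<in> V" using subspace_closed by blast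
  moreover have "norm_L2 (\<lambda>x. A h x - c * h x) = 0"
    by (rule eigen_limit[OF _ \<open>h \<in> V\<close> lim]) (use F in auto)
  ultimately show "h \<in> {f \<in> V. norm_L2 (\<lambda>x. A f x - c * f x) = 0}" by simp
qed (auto intro: subspace_L2)

lemma compose:
  assumes "bounded_linear_L2_op V B D"
  shows "bounded_linear_L2_op V (\<lambda>f. A (B f)) (C * D)"
proof -
  interpret B: bounded_linear_L2_op V B D by fact
  show ?thesis
  proof (rule bounded_linear_L2_op.intro[OF closed_L2_subspace_axioms], unfold_locales)
    fix f assume f: "f \<in> V"
    show "A (B f) \<in> V" by (rule maps_into[OF B.maps_into[OF f]])
    have "norm_L2 (A (B f)) \<le> C * norm_L2 (B f)" by (rule bounded[OF B.maps_into[OF f]])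
    also have "\<dots> \<le> C * (D * norm_L2 f)" by (rule mult_left_mono[OF B.bounded[OF f] bound_nonneg])
    finally show "norm_L2 (A (B f)) \<le> C * D * norm_L2 f" by (simp add: mult.assoc)
  next
    fix f g c d assume f: "f \<in> V" and g: "g \<in> V"
    show "A (B (\<lambda>x. c * f x + d * g x)) = (\<lambda>x. c * A (B f) x + d * A (B g) x)"
      by (simp only: B.linear[OF f g] linear[OF B.maps_into[OF f] B.maps_into[OF g]])
  next
    show "C * D \<ge> 0" using bound_nonneg B.bound_nonneg by simp
  qed
qed

lemma square: "bounded_linear_L2_op V (\<lambda>f. A (A f)) (C * C)"
  using compose closed_L2_subspace_axioms bounded_linear_L2_op_axioms
  by (simp add: bounded_linear_L2_op_def)

lemma eigenvector_of_square:
  assumes "h \<in> V" "norm_L2 h > 0" "t > 0" "norm_L2 (\<lambda>x. A (A h) x - t\<^sup>2 * h x) = 0"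
  shows "\<exists>u \<nu>. u \<in> V \<and> \<nu> \<noteq> 0 \<and> norm_L2 u > 0 \<and> norm_L2 (\<lambda>x. A u x - \<nu> * u x) = 0"
proof -
  define u where "u = (\<lambda>x. A h x + t * h x)"
  have "u \<in> V" unfolding u_def using subspace_lin[OF maps_into[OF assms(1)] assms(1), of 1 t] by simp
  have "(\<lambda>x. A u x - t * u x) = (\<lambda>x. A (A h) x - t\<^sup>2 * h x)"
    using linear[OF maps_into[OF assms(1)] assms(1), of 1 t]
    by (simp add: u_def algebra_simps power2_eq_square)
  then have u_eigen: "norm_L2 (\<lambda>x. A u x - t * u x) = 0" using assms(4) by simp
  show ?thesis
  proof (cases "norm_L2 u > 0")
    case True
    then show ?thesis using \<open>u \<in> V\<close> u_eigen assms(3) by (intro exI[of _ u] exI[of _ t]) auto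
  next
    case False
    then have "norm_L2 (\<lambda>x. A h x - (- t) * h x) = 0"
      using norm_L2_nonneg[of u] unfolding u_def by simp
    then show ?thesis using assms(1-3) by (intro exI[of _ h] exI[of _ "- t"]) auto
  qed
qed

end

locale compact_selfadjoint_L2_op = bounded_linear_L2_op +
  assumes selfadjoint: "f \<in> V \<Longrightarrow> g \<in> V \<Longrightarrow> inner_L2 (A f) g = inner_L2 f (A g)"
    and compact: "(\<And>n. F n \<in> V) \<Longrightarrow> (\<And>n. norm_L2 (F n) \<le> 1) \<Longrightarrow>
      \<exists>(r :: nat \<Rightarrow> nat) h. strict_mono r \<and> L2_unit h \<and>
        (\<lambda>n. norm_L2 (\<lambda>x. A (F (r n)) x - h x)) \<longlonglongrightarrow> 0"
begin

definition op_norm :: real where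
  "op_norm = Sup {norm_L2 (A f) | f. f \<in> V \<and> norm_L2 f \<le> 1}"

lemma op_norm_bdd_above: "bdd_above {norm_L2 (A f) | f. f \<in> V \<and> norm_L2 f \<le> 1}"
proof (rule bdd_aboveI)
  fix y assume "y \<in> {norm_L2 (A f) | f. f \<in> V \<and> norm_L2 f \<le> 1}"
  then obtain f where "f \<in> V" "norm_L2 f \<le> 1" "y = norm_L2 (A f)" by blast
  then show "y \<le> C"
    using bounded[of f] mult_left_mono[of "norm_L2 f" 1 C] bound_nonneg by auto
qed

lemma op_norm_upper:
  assumes "f \<in> V" "norm_L2 f \<le> 1"
  shows "norm_L2 (A f) \<le> op_norm"
  unfolding op_norm_def by (rule cSup_upper[OF _ op_norm_bdd_above]) (use assms in auto)

lemma norm_op_le: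
  assumes "f \<in> V"
  shows "norm_L2 (A f) \<le> op_norm * norm_L2 f"
proof (cases "norm_L2 f = 0")
  case True
  then show ?thesis using bounded[OF assms] norm_L2_nonneg[of "A f"] by simp
next
  case False
  then have nf: "norm_L2 f > 0" using norm_L2_nonneg[of f] by simp
  define g where "g = (\<lambda>x. (1 / norm_L2 f) * f x)"
  have "g \<in> V" unfolding g_def by (rule subspace_scale[OF assms])
  moreover have "norm_L2 g = 1" unfolding g_def norm_L2_scale using nf by simp
  ultimately have "norm_L2 (A g) \<le> op_norm" by (intro op_norm_upper) auto
  moreover have "norm_L2 (A g) = norm_L2 (A f) / norm_L2 f"
    unfolding g_def op_scale[OF assms] norm_L2_scale using nf by simp
  ultimately show ?thesis using nf by (simp add: field_simps)
qed

lemma op_norm_pos: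
  assumes "f \<in> V" "norm_L2 (A f) > 0"
  shows "op_norm > 0"
  using norm_op_le[OF assms(1)] assms(2) norm_L2_nonneg[of f]
  by (metis less_le_trans mult_nonpos_nonneg not_less)

lemma maximizing_sequence:
  assumes "f \<in> V" "norm_L2 (A f) > 0"
  obtains F where "\<And>n. F n \<in> V" "\<And>n. norm_L2 (F n) \<le> 1"
    "(\<lambda>n. norm_L2 (A (F n))) \<longlonglongrightarrow> op_norm"
proof -
  have "\<exists>g. g \<in> V \<and> norm_L2 g \<le> 1 \<and> op_norm - inverse (real (Suc n)) < norm_L2 (A g)" for n
  proof -
    have "(\<lambda>x. 0 * f x) \<in> V" "norm_L2 (\<lambda>x. 0 * f x) \<le> 1"
      using subspace_scale[OF assms(1), of 0] by (auto simp only: norm_L2_scale)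
    then have "{norm_L2 (A g) | g. g \<in> V \<and> norm_L2 g \<le> 1} \<noteq> {}" by blast
    moreover have "op_norm - inverse (real (Suc n)) < op_norm" by simp
    ultimately show ?thesis
      unfolding op_norm_def by (subst (asm) less_cSup_iff[OF _ op_norm_bdd_above]) auto
  qed
  then obtain F where F: "\<And>n. F n \<in> V" "\<And>n. norm_L2 (F n) \<le> 1"
    "\<And>n. op_norm - inverse (real (Suc n)) < norm_L2 (A (F n))"
    by metis
  have "(\<lambda>n. norm_L2 (A (F n))) \<longlonglongrightarrow> op_norm"
  proof (rule tendsto_sandwich[of "\<lambda>n. op_norm + - inverse (real (Suc n))" _ _ "\<lambda>n. op_norm"])
    show "(\<lambda>n. op_norm + - inverse (real (Suc n))) \<longlonglongrightarrow> op_norm"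
      by (rule LIMSEQ_inverse_real_of_nat_add_minus)
    show "\<forall>\<^sub>F n in sequentially. op_norm + - inverse (real (Suc n)) \<le> norm_L2 (A (F n))"
      using F(3) by (intro always_eventually allI less_imp_le) simp
    show "\<forall>\<^sub>F n in sequentially. norm_L2 (A (F n)) \<le> op_norm"
      using F(1,2) op_norm_upper by simp
  qed simp
  then show ?thesis using F that by blast
qed

lemma square_defect_le:
  assumes "f \<in> V" "norm_L2 f \<le> 1" "op_norm > 0"
  shows "norm_L2 (\<lambda>x. A (A f) x - op_norm\<^sup>2 * f x)
    \<le> op_norm * sqrt (op_norm\<^sup>2 - (norm_L2 (A f))\<^sup>2)"
proof -
  let ?t = op_norm and ?a = "norm_L2 (A f)"
  have Af: "A f \<in> V" and L2: "L2_unit f" "L2_unit (A (A f))"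
    using assms(1) maps_into subspace_L2 by auto
  have a_le: "?a \<le> ?t" by (rule op_norm_upper[OF assms(1,2)])
  have "inner_L2 (A (A f)) f = ?a\<^sup>2"
    using selfadjoint[OF Af assms(1)] by (simp add: norm_L2_power2)
  then have "(norm_L2 (\<lambda>x. A (A f) x - ?t\<^sup>2 * f x))\<^sup>2
      = inner_L2 (A (A f)) (A (A f)) - 2 * ?t\<^sup>2 * ?a\<^sup>2 + (?t\<^sup>2)\<^sup>2 * inner_L2 f f"
    by (simp only: norm_L2_power2 inner_L2_diff_self[OF L2(2,1)])
  moreover have "inner_L2 (A (A f)) (A (A f)) \<le> (?t * ?a)\<^sup>2"
    using norm_op_le[OF Af] norm_L2_nonneg[of "A (A f)"]
    by (simp flip: norm_L2_power2 add: power_mono)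
  moreover have "(?t\<^sup>2)\<^sup>2 * inner_L2 f f \<le> (?t\<^sup>2)\<^sup>2"
  proof -
    have "inner_L2 f f \<le> 1"
      using power_mono[OF assms(2) norm_L2_nonneg, of 2] by (simp add: norm_L2_power2)
    then show ?thesis using mult_left_mono[of "inner_L2 f f" 1 "(?t\<^sup>2)\<^sup>2"] by simp
  qed
  ultimately have "(norm_L2 (\<lambda>x. A (A f) x - ?t\<^sup>2 * f x))\<^sup>2 \<le> (?t * ?a)\<^sup>2 - 2 * ?t\<^sup>2 * ?a\<^sup>2 + (?t\<^sup>2)\<^sup>2"
    by linarith
  also have "\<dots> = ?t\<^sup>2 * (?t\<^sup>2 - ?a\<^sup>2)"
    by (simp add: power_mult_distrib power2_eq_square algebra_simps)
  also have "\<dots> = (?t * sqrt (?t\<^sup>2 - ?a\<^sup>2))\<^sup>2"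
    using power_mono[OF a_le norm_L2_nonneg, of 2] by (simp add: power_mult_distrib)
  finally show ?thesis
    by (rule power2_le_imp_le) (use assms(3) power_mono[OF a_le norm_L2_nonneg, of 2] in simp)
qed

text \<open>The variational construction of an eigenvector: along a maximizing sequence for
  \<open>norm_L2 (A f)\<close>, the defect \<open>A (A f) - op_norm\<^sup>2 f\<close> tends to zero, and compactness
  extracts a limit, which is an eigenvector of \<open>A\<^sup>2\<close>.\<close>

lemma maximizing_sequence_defect:
  assumes "op_norm > 0" "\<And>n. F n \<in> V" "\<And>n. norm_L2 (F n) \<le> 1"
    and "(\<lambda>n. norm_L2 (A (F n))) \<longlonglongrightarrow> op_norm"
  shows "(\<lambda>n. norm_L2 (\<lambda>x. A (A (F n)) x - op_norm\<^sup>2 * F n x)) \<longlonglongrightarrow> 0"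
proof (rule norm_L2_tendsto_zero_le)
  show "norm_L2 (\<lambda>x. A (A (F n)) x - op_norm\<^sup>2 * F n x)
      \<le> op_norm * sqrt (op_norm\<^sup>2 - (norm_L2 (A (F n)))\<^sup>2)" for n
    by (rule square_defect_le[OF assms(2,3,1)])
  have "(\<lambda>n. op_norm * sqrt (op_norm\<^sup>2 - (norm_L2 (A (F n)))\<^sup>2))
      \<longlonglongrightarrow> op_norm * sqrt (op_norm\<^sup>2 - op_norm\<^sup>2)"
    by (intro tendsto_intros assms(4))
  then show "(\<lambda>n. op_norm * sqrt (op_norm\<^sup>2 - (norm_L2 (A (F n)))\<^sup>2)) \<longlonglongrightarrow> 0" by simp
qed

lemma square_subsequence_converges:
  assumes t: "op_norm > 0" and F: "\<And>n. F n \<in> V" "\<And>n. norm_L2 (F n) \<le> 1"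
  obtains r h where "strict_mono (r :: nat \<Rightarrow> nat)" "L2_unit h"
    "(\<lambda>n. norm_L2 (\<lambda>x. A (A (F (r n))) x - h x)) \<longlonglongrightarrow> 0"
proof -
  have AF: "A (F n) \<in> V" for n using F(1) maps_into by auto
  define G where "G n = (\<lambda>x. (1 / op_norm) * A (F n) x)" for n
  have G: "G n \<in> V" "norm_L2 (G n) \<le> 1" for n
  proof -
    show "G n \<in> V" unfolding G_def by (rule subspace_scale[OF AF])
    show "norm_L2 (G n) \<le> 1"
      unfolding G_def norm_L2_scale using op_norm_upper[OF F] t by simp
  qed
  obtain r h0 where r: "strict_mono r" and "L2_unit h0"
    and lim0: "(\<lambda>n. norm_L2 (\<lambda>x. A (G (r n)) x - h0 x)) \<longlonglongrightarrow> 0"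
    using compact[of G, OF G(1) G(2)] by blast
  define h where "h = (\<lambda>x. op_norm * h0 x)"
  have "(\<lambda>x. A (A (F n)) x - h x) = (\<lambda>x. op_norm * (A (G n) x - h0 x))" for n
    unfolding G_def h_def op_scale[OF AF] using t by (auto simp: field_simps)
  then have "norm_L2 (\<lambda>x. A (A (F n)) x - h x) = op_norm * norm_L2 (\<lambda>x. A (G n) x - h0 x)" for n
    using t by (simp add: norm_L2_scale)
  then have "(\<lambda>n. norm_L2 (\<lambda>x. A (A (F (r n))) x - h x)) \<longlonglongrightarrow> 0"
    using tendsto_mult_right_zero[OF lim0, of op_norm] by simp
  moreover have "L2_unit h" unfolding h_def using \<open>L2_unit h0\<close> by auto
  ultimately show ?thesis using that r by blast
qed

lemma square_limit_norm_ge: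
  assumes F: "\<And>n. F n \<in> V" "\<And>n. norm_L2 (F n) \<le> 1" and "L2_unit h"
    and lim_a: "(\<lambda>n. norm_L2 (A (F n))) \<longlonglongrightarrow> t"
    and lim: "(\<lambda>n. norm_L2 (\<lambda>x. A (A (F n)) x - h x)) \<longlonglongrightarrow> 0"
  shows "t\<^sup>2 \<le> norm_L2 h"
proof (rule LIMSEQ_le_const2)
  show "(\<lambda>n. (norm_L2 (A (F n)))\<^sup>2 - norm_L2 (\<lambda>x. A (A (F n)) x - h x)) \<longlonglongrightarrow> t\<^sup>2"
    using tendsto_diff[OF tendsto_power[OF lim_a, of 2] lim] by simp
  have "(norm_L2 (A (F n)))\<^sup>2 - norm_L2 (\<lambda>x. A (A (F n)) x - h x) \<le> norm_L2 h" for n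
  proof -
    have AF: "A (F n) \<in> V" "L2_unit (A (A (F n)))" using F(1) maps_into subspace_L2 by auto
    have "(norm_L2 (A (F n)))\<^sup>2 = inner_L2 (A (A (F n))) (F n)"
      using selfadjoint[OF AF(1) F(1)] by (simp add: norm_L2_power2)
    also have "\<dots> \<le> norm_L2 (A (A (F n))) * norm_L2 (F n)"
      using inner_L2_cauchy_schwarz[OF AF(2) subspace_L2[OF F(1)[of n]]] by linarith
    also have "\<dots> \<le> norm_L2 (A (A (F n)))"
      using mult_left_mono[OF F(2) norm_L2_nonneg] by simp
    also have "\<dots> \<le> norm_L2 (\<lambda>x. A (A (F n)) x - h x) + norm_L2 h"
      using norm_L2_lin[of "\<lambda>x. A (A (F n)) x - h x" h 1 1] AF(2) \<open>L2_unit h\<close> by auto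
    finally show ?thesis by simp
  qed
  then show "\<exists>N. \<forall>n\<ge>N. (norm_L2 (A (F n)))\<^sup>2 - norm_L2 (\<lambda>x. A (A (F n)) x - h x) \<le> norm_L2 h"
    by blast
qed

lemma square_eigenvector:
  assumes "f0 \<in> V" "norm_L2 (A f0) > 0"
  obtains h where "h \<in> V" "norm_L2 h > 0" "norm_L2 (\<lambda>x. A (A h) x - op_norm\<^sup>2 * h x) = 0"
proof -
  interpret AA: bounded_linear_L2_op V "\<lambda>f. A (A f)" "C * C" by (rule square)
  let ?t = op_norm
  have t: "?t > 0" by (rule op_norm_pos[OF assms])
  obtain F where F: "\<And>n. F n \<in> V" "\<And>n. norm_L2 (F n) \<le> 1"
    and lim_a: "(\<lambda>n. norm_L2 (A (F n))) \<longlonglongrightarrow> ?t"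
    using maximizing_sequence[OF assms] by blast
  have defect: "(\<lambda>n. norm_L2 (\<lambda>x. A (A (F n)) x - ?t\<^sup>2 * F n x)) \<longlonglongrightarrow> 0"
    by (rule maximizing_sequence_defect[OF t F lim_a])
  obtain r h where r: "strict_mono r" and "L2_unit h"
    and lim_AA: "(\<lambda>n. norm_L2 (\<lambda>x. A (A (F (r n))) x - h x)) \<longlonglongrightarrow> 0"
    by (rule square_subsequence_converges[OF t F])
  have defect_r: "(\<lambda>n. norm_L2 (\<lambda>x. A (A (F (r n))) x - ?t\<^sup>2 * F (r n) x)) \<longlonglongrightarrow> 0"
    using LIMSEQ_subseq_LIMSEQ[OF defect r] by (simp add: o_def)
  have lim_F: "(\<lambda>n. norm_L2 (\<lambda>x. ?t\<^sup>2 * F (r n) x - h x)) \<longlonglongrightarrow> 0"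
    using subspace_L2 F(1) maps_into
    by (intro norm_L2_tendsto_transfer[OF _ _ \<open>L2_unit h\<close> defect_r lim_AA]) auto
  have "h \<in> V"
    by (rule subspace_closed[OF _ \<open>L2_unit h\<close> lim_F]) (rule subspace_scale[OF F(1)])
  have "?t\<^sup>2 \<le> norm_L2 h"
    using square_limit_norm_ge[of "\<lambda>n. F (r n)", OF F \<open>L2_unit h\<close> _ lim_AA]
      LIMSEQ_subseq_LIMSEQ[OF lim_a r] by (simp add: o_def)
  then have "norm_L2 h > 0" using t by (meson less_le_trans zero_less_power)
  have "norm_L2 (\<lambda>x. A (A h) x - ?t\<^sup>2 * h x) = 0"
  proof (rule AA.eigen_limit[OF _ \<open>h \<in> V\<close> lim_F])
    show "(\<lambda>x. ?t\<^sup>2 * F (r n) x) \<in> V" for n by (rule subspace_scale[OF F(1)])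
    have "norm_L2 (\<lambda>x. A (A (\<lambda>x. ?t\<^sup>2 * F (r n) x)) x - ?t\<^sup>2 * (?t\<^sup>2 * F (r n) x))
        = ?t\<^sup>2 * norm_L2 (\<lambda>x. A (A (F (r n))) x - ?t\<^sup>2 * F (r n) x)" for n
    proof -
      have "(\<lambda>x. A (A (\<lambda>x. ?t\<^sup>2 * F (r n) x)) x - ?t\<^sup>2 * (?t\<^sup>2 * F (r n) x))
          = (\<lambda>x. ?t\<^sup>2 * (A (A (F (r n))) x - ?t\<^sup>2 * F (r n) x))"
        unfolding AA.op_scale[OF F(1)] by (simp add: right_diff_distrib)
      then show ?thesis by (simp add: norm_L2_scale)
    qed
    then show "(\<lambda>n. norm_L2 (\<lambda>x. A (A (\<lambda>x. ?t\<^sup>2 * F (r n) x)) x - ?t\<^sup>2 * (?t\<^sup>2 * F (r n) x)))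
        \<longlonglongrightarrow> 0"
      using tendsto_mult_right_zero[OF defect_r, of "?t\<^sup>2"] by simp
  qed
  then show ?thesis using that \<open>h \<in> V\<close> \<open>norm_L2 h > 0\<close> by blast
qed

theorem eigenvector_exists:
  assumes "f0 \<in> V" "norm_L2 (A f0) > 0"
  shows "\<exists>h \<nu>. h \<in> V \<and> \<nu> \<noteq> 0 \<and> norm_L2 h > 0 \<and> norm_L2 (\<lambda>x. A h x - \<nu> * h x) = 0"
proof -
  obtain h where "h \<in> V" "norm_L2 h > 0" "norm_L2 (\<lambda>x. A (A h) x - op_norm\<^sup>2 * h x) = 0"
    using square_eigenvector[OF assms] by blast
  then show ?thesis using eigenvector_of_square op_norm_pos[OF assms] by blast
qed

lemma restrict_to_eigenspace:
  assumes "bounded_linear_L2_op V B D" and comm: "\<And>f. f \<in> V \<Longrightarrow> A (B f) = B (A f)"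
  shows "compact_selfadjoint_L2_op {f \<in> V. norm_L2 (\<lambda>x. B f x - c * f x) = 0} A C"
proof -
  interpret B: bounded_linear_L2_op V B D by fact
  interpret E: closed_L2_subspace "{f \<in> V. norm_L2 (\<lambda>x. B f x - c * f x) = 0}"
    by (rule B.eigenspace_closed_L2_subspace)
  show ?thesis
  proof (unfold_locales)
    fix f assume "f \<in> {f \<in> V. norm_L2 (\<lambda>x. B f x - c * f x) = 0}"
    then have f: "f \<in> V" "norm_L2 (\<lambda>x. B f x - c * f x) = 0" by auto
    have "(\<lambda>x. B (A f) x - c * A f x) = A (\<lambda>x. B f x - c * f x)"
      using comm[OF f(1)] op_diff[OF B.maps_into[OF f(1)] subspace_scale[OF f(1)]] op_scale[OF f(1)]
      by simp
    moreover have "norm_L2 (A (\<lambda>x. B f x - c * f x)) \<le> C * 0"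
      using bounded[of "\<lambda>x. B f x - c * f x"] f B.maps_into subspace_lin[of "B f" f 1 "- c"] by simp
    ultimately show "A f \<in> {f \<in> V. norm_L2 (\<lambda>x. B f x - c * f x) = 0}"
      using maps_into[OF f(1)] norm_L2_nonneg by (auto intro: antisym)
    show "norm_L2 (A f) \<le> C * norm_L2 f" by (rule bounded[OF f(1)])
  qed (use linear selfadjoint compact bound_nonneg in auto)
qed

lemma compose_commuting:
  assumes "bounded_linear_L2_op V B D"
    and B_selfadjoint: "\<And>f g. f \<in> V \<Longrightarrow> g \<in> V \<Longrightarrow> inner_L2 (B f) g = inner_L2 f (B g)"
    and comm: "\<And>f. f \<in> V \<Longrightarrow> A (B f) = B (A f)"
  shows "compact_selfadjoint_L2_op V (\<lambda>f. A (B f)) (C * D)"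
proof -
  interpret B: bounded_linear_L2_op V B D by fact
  interpret AB: bounded_linear_L2_op V "\<lambda>f. A (B f)" "C * D" by (rule compose) fact
  show ?thesis
  proof (unfold_locales)
    fix f g assume f: "f \<in> V" and g: "g \<in> V"
    show "inner_L2 (A (B f)) g = inner_L2 f (A (B g))"
      using selfadjoint[OF B.maps_into[OF f] g] B_selfadjoint[OF f maps_into[OF g]] comm[OF g] by simp
  next
    fix F :: "nat \<Rightarrow> real \<Rightarrow> real" assume F: "\<And>n. F n \<in> V" "\<And>n. norm_L2 (F n) \<le> 1"
    define G where "G n = (\<lambda>x. (1 / (D + 1)) * B (F n) x)" for n
    have "D \<ge> 0" by (rule B.bound_nonneg)
    have G: "G n \<in> V" "norm_L2 (G n) \<le> 1" for n
    proof -
      show "G n \<in> V" unfolding G_def by (rule subspace_scale[OF B.maps_into[OF F(1)]])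
      have "norm_L2 (B (F n)) \<le> D + 1"
        using B.bounded[OF F(1)[of n]] mult_left_mono[OF F(2)[of n] \<open>D \<ge> 0\<close>] by linarith
      then show "norm_L2 (G n) \<le> 1" unfolding G_def norm_L2_scale using \<open>D \<ge> 0\<close> by simp
    qed
    obtain r h where "strict_mono r" "L2_unit h" and lim: "(\<lambda>n. norm_L2 (\<lambda>x. A (G (r n)) x - h x)) \<longlonglongrightarrow> 0"
      using compact[of G, OF G(1) G(2)] by blast
    have "norm_L2 (\<lambda>x. A (B (F n)) x - (D + 1) * h x) = (D + 1) * norm_L2 (\<lambda>x. A (G n) x - h x)" for n
    proof -
      have "(\<lambda>x. A (B (F n)) x - (D + 1) * h x) = (\<lambda>x. (D + 1) * (A (G n) x - h x))"
        unfolding G_def op_scale[OF B.maps_into[OF F(1)]] using \<open>D \<ge> 0\<close> by (auto simp: field_simps)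
      then show ?thesis using \<open>D \<ge> 0\<close> by (simp add: norm_L2_scale)
    qed
    then have "(\<lambda>n. norm_L2 (\<lambda>x. A (B (F (r n))) x - (D + 1) * h x)) \<longlonglongrightarrow> 0"
      using tendsto_mult_right_zero[OF lim, of "D + 1"] by simp
    then show "\<exists>(r :: nat \<Rightarrow> nat) h. strict_mono r \<and> L2_unit h \<and>
        (\<lambda>n. norm_L2 (\<lambda>x. A (B (F (r n))) x - h x)) \<longlonglongrightarrow> 0"
      using \<open>strict_mono r\<close> \<open>L2_unit h\<close> by blast
  qed
qed

end

definition op_poly :: "((real \<Rightarrow> real) \<Rightarrow> real \<Rightarrow> real) \<Rightarrow> real poly \<Rightarrow> (real \<Rightarrow> real) \<Rightarrow> real \<Rightarrow> real"
  where "op_poly A p f = (\<lambda>x. \<Sum>k\<le>degree p. coeff p k * (A ^^ k) f x)"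

lemma (in closed_L2_subspace) subspace_sum:
  assumes "finite I" "I \<noteq> {}" "\<And>i. i \<in> I \<Longrightarrow> u i \<in> V"
  shows "(\<lambda>x. \<Sum>i\<in>I. c i * u i x) \<in> V"
  using assms
proof (induction I rule: finite_ne_induct)
  case (insert j I)
  then show ?case using subspace_lin[of "u j" "\<lambda>x. \<Sum>i\<in>I. c i * u i x" "c j" 1] by simp
qed (use subspace_scale in simp)

context bounded_linear_L2_op
begin

lemma op_sum:
  assumes "finite I" "I \<noteq> {}" "\<And>i. i \<in> I \<Longrightarrow> u i \<in> V"
  shows "A (\<lambda>x. \<Sum>i\<in>I. c i * u i x) = (\<lambda>x. \<Sum>i\<in>I. c i * A (u i) x)"
  using assms
proof (induction I rule: finite_ne_induct)
  case (insert j I)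
  have "A (\<lambda>x. c j * u j x + 1 * (\<Sum>i\<in>I. c i * u i x))
      = (\<lambda>x. c j * A (u j) x + 1 * A (\<lambda>x. \<Sum>i\<in>I. c i * u i x) x)"
    using insert by (intro linear subspace_sum) auto
  then show ?case using insert by simp
qed (use op_scale in simp)

lemma funpow_maps_into: "f \<in> V \<Longrightarrow> (A ^^ k) f \<in> V"
  by (induction k) (auto intro: maps_into)

lemma funpow_bounded_linear: "bounded_linear_L2_op V (A ^^ k) (C ^ k)"
proof (induction k)
  case 0
  show ?case
    by (intro bounded_linear_L2_op.intro[OF closed_L2_subspace_axioms] bounded_linear_L2_op_axioms.intro)
      auto
next
  case (Suc k)
  then show ?case using compose[OF Suc] by (simp add: comp_def)
qed

lemma funpow_selfadjoint:
  assumes sa: "\<And>f g. f \<in> V \<Longrightarrow> g \<in> V \<Longrightarrow> inner_L2 (A f) g = inner_L2 f (A g)"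
  shows "f \<in> V \<Longrightarrow> g \<in> V \<Longrightarrow> inner_L2 ((A ^^ k) f) g = inner_L2 f ((A ^^ k) g)"
proof (induction k arbitrary: g)
  case (Suc k)
  have "inner_L2 ((A ^^ Suc k) f) g = inner_L2 ((A ^^ k) f) (A g)"
    using sa[OF funpow_maps_into[OF Suc.prems(1)] Suc.prems(2)] by simp
  also have "\<dots> = inner_L2 f ((A ^^ Suc k) g)"
    using Suc.IH[OF Suc.prems(1) maps_into[OF Suc.prems(2)]] by (simp add: funpow_swap1)
  finally show ?case .
qed simp

lemma funpow_eigen:
  assumes "h \<in> V" "norm_L2 (\<lambda>x. A h x - \<nu> * h x) = 0"
  shows "norm_L2 (\<lambda>x. (A ^^ k) h x - \<nu> ^ k * h x) = 0"
proof (induction k)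
  case 0
  then show ?case by (simp add: norm_L2_def inner_L2_def)
next
  case (Suc k)
  have d: "(\<lambda>x. (A ^^ k) h x - \<nu> ^ k * h x) \<in> V"
    using subspace_lin[OF funpow_maps_into[OF assms(1)] assms(1), where c = 1 and d = "- (\<nu> ^ k)"] by simp
  have "A (\<lambda>x. (A ^^ k) h x - \<nu> ^ k * h x) = (\<lambda>x. A ((A ^^ k) h) x - \<nu> ^ k * A h x)"
    using op_diff[OF funpow_maps_into[OF assms(1)] subspace_scale[OF assms(1)]] op_scale[OF assms(1)]
    by simp
  then have eq: "(\<lambda>x. (A ^^ Suc k) h x - \<nu> ^ Suc k * h x)
      = (\<lambda>x. 1 * A (\<lambda>x. (A ^^ k) h x - \<nu> ^ k * h x) x + \<nu> ^ k * (A h x - \<nu> * h x))"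
    unfolding \<open>A (\<lambda>x. (A ^^ k) h x - \<nu> ^ k * h x) = _\<close> by (simp add: algebra_simps)
  have "norm_L2 (\<lambda>x. (A ^^ Suc k) h x - \<nu> ^ Suc k * h x)
      \<le> \<bar>1\<bar> * norm_L2 (A (\<lambda>x. (A ^^ k) h x - \<nu> ^ k * h x))
        + \<bar>\<nu> ^ k\<bar> * norm_L2 (\<lambda>x. A h x - \<nu> * h x)"
    unfolding eq using subspace_L2 maps_into d assms(1)
    by (intro norm_L2_lin) (auto intro!: L2_unit_diff L2_unit_scale)
  also have "\<dots> \<le> 0"
    using bounded[OF d] Suc.IH assms(2) by simp
  finally show ?case using norm_L2_nonneg by (intro antisym) auto
qed

lemma op_poly_bounded_linear:
  "bounded_linear_L2_op V (op_poly A p) (\<Sum>k\<le>degree p. \<bar>coeff p k\<bar> * C ^ k)"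
proof (intro bounded_linear_L2_op.intro[OF closed_L2_subspace_axioms] bounded_linear_L2_op_axioms.intro)
  fix f assume f: "f \<in> V"
  then show "op_poly A p f \<in> V"
    unfolding op_poly_def by (intro subspace_sum funpow_maps_into) auto
  have "norm_L2 (op_poly A p f) \<le> (\<Sum>k\<le>degree p. \<bar>coeff p k\<bar> * norm_L2 ((A ^^ k) f))"
    unfolding op_poly_def using f by (intro norm_L2_sum subspace_L2 funpow_maps_into) auto
  also have "\<dots> \<le> (\<Sum>k\<le>degree p. \<bar>coeff p k\<bar> * (C ^ k * norm_L2 f))"
    using bounded_linear_L2_op.bounded[OF funpow_bounded_linear f]
    by (intro sum_mono mult_left_mono) auto
  finally show "norm_L2 (op_poly A p f) \<le> (\<Sum>k\<le>degree p. \<bar>coeff p k\<bar> * C ^ k) * norm_L2 f"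
    by (simp add: sum_distrib_right mult.assoc)
next
  fix f g c d assume "f \<in> V" "g \<in> V"
  then show "op_poly A p (\<lambda>x. c * f x + d * g x) = (\<lambda>x. c * op_poly A p f x + d * op_poly A p g x)"
    unfolding op_poly_def
    by (simp add: bounded_linear_L2_op.linear[OF funpow_bounded_linear] sum.distrib
        sum_distrib_left algebra_simps)
qed (use bound_nonneg in \<open>auto intro!: sum_nonneg\<close>)

lemma op_poly_selfadjoint:
  assumes sa: "\<And>f g. f \<in> V \<Longrightarrow> g \<in> V \<Longrightarrow> inner_L2 (A f) g = inner_L2 f (A g)"
    and "f \<in> V" "g \<in> V"
  shows "inner_L2 (op_poly A p f) g = inner_L2 f (op_poly A p g)"
proof -
  have "inner_L2 (op_poly A p f) g = (\<Sum>k\<le>degree p. coeff p k * inner_L2 ((A ^^ k) f) g)"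
    unfolding op_poly_def using assms(2,3) subspace_L2 funpow_maps_into by (intro inner_L2_sum) auto
  also have "\<dots> = (\<Sum>k\<le>degree p. coeff p k * inner_L2 ((A ^^ k) g) f)"
    using funpow_selfadjoint[OF sa assms(2,3)] by (simp add: inner_L2_commute)
  also have "\<dots> = inner_L2 (op_poly A p g) f"
    unfolding op_poly_def using assms(2,3) subspace_L2 funpow_maps_into by (intro inner_L2_sum[symmetric]) auto
  finally show ?thesis by (simp add: inner_L2_commute)
qed

lemma op_poly_commute:
  assumes "f \<in> V"
  shows "A (op_poly A p f) = op_poly A p (A f)"
  unfolding op_poly_def using assms
  by (subst op_sum) (auto intro: funpow_maps_into simp: funpow_swap1)

lemma op_poly_eigen:
  assumes "h \<in> V" "norm_L2 (\<lambda>x. A h x - \<nu> * h x) = 0"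
  shows "norm_L2 (\<lambda>x. op_poly A p h x - poly p \<nu> * h x) = 0"
proof -
  have eq: "(\<lambda>x. op_poly A p h x - poly p \<nu> * h x)
      = (\<lambda>x. \<Sum>k\<le>degree p. coeff p k * ((A ^^ k) h x - \<nu> ^ k * h x))"
    unfolding op_poly_def poly_altdef
    by (simp add: sum_distrib_right sum_subtractf right_diff_distrib mult.assoc)
  have "norm_L2 (\<lambda>x. op_poly A p h x - poly p \<nu> * h x)
      \<le> (\<Sum>k\<le>degree p. \<bar>coeff p k\<bar> * norm_L2 (\<lambda>x. (A ^^ k) h x - \<nu> ^ k * h x))"
    unfolding eq using assms(1) subspace_L2 funpow_maps_into
    by (intro norm_L2_sum) (auto intro!: L2_unit_diff L2_unit_scale)
  also have "\<dots> = 0" using funpow_eigen[OF assms] by simp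
  finally show ?thesis using norm_L2_nonneg by (intro antisym) auto
qed

end

theorem (in compact_selfadjoint_L2_op) eigenvalue_poly_annihilates:
  assumes vanish: "\<And>h \<nu>. h \<in> V \<Longrightarrow> \<nu> \<noteq> 0 \<Longrightarrow> norm_L2 h > 0 \<Longrightarrow>
      norm_L2 (\<lambda>x. A h x - \<nu> * h x) = 0 \<Longrightarrow> poly p \<nu> = 0"
    and "f \<in> V"
  shows "norm_L2 (A (op_poly A p f)) = 0"
proof (rule ccontr)
  assume "norm_L2 (A (op_poly A p f)) \<noteq> 0"
  then have S_f: "norm_L2 (A (op_poly A p f)) > 0" using norm_L2_nonneg[of "A (op_poly A p f)"] by linarith
  let ?S = "\<lambda>f. A (op_poly A p f)" and ?D = "\<Sum>k\<le>degree p. \<bar>coeff p k\<bar> * C ^ k"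
  interpret P: bounded_linear_L2_op V "op_poly A p" ?D by (rule op_poly_bounded_linear)
  interpret S: compact_selfadjoint_L2_op V ?S "C * ?D"
    by (rule compose_commuting[OF op_poly_bounded_linear])
      (auto intro: op_poly_selfadjoint[OF selfadjoint] op_poly_commute)
  obtain h \<mu> where h: "h \<in> V" "\<mu> \<noteq> 0" "norm_L2 h > 0" "norm_L2 (\<lambda>x. ?S h x - \<mu> * h x) = 0"
    using S.eigenvector_exists[OF \<open>f \<in> V\<close> S_f] by blast
  let ?E = "{g \<in> V. norm_L2 (\<lambda>x. ?S g x - \<mu> * g x) = 0}"
  interpret E: compact_selfadjoint_L2_op ?E A C
    by (rule restrict_to_eigenspace[OF compose[OF op_poly_bounded_linear]])
      (simp add: op_poly_commute maps_into)
  have S_le: "norm_L2 (?S g) \<le> C * ?D * norm_L2 g" if "g \<in> V" for g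
    by (rule S.bounded[OF that])
  have "norm_L2 (A h) > 0"
  proof (rule ccontr)
    assume "\<not> norm_L2 (A h) > 0"
    then have "norm_L2 (A h) = 0" using norm_L2_nonneg[of "A h"] by linarith
    then have "norm_L2 (?S h) = 0"
      using P.bounded[OF maps_into[OF h(1)]] op_poly_commute[OF h(1)] norm_L2_nonneg[of "?S h"]
      by simp
    then have "norm_L2 h = 0"
      using norm_L2_zero_if_eigen_zero h subspace_L2 S.maps_into by blast
    then show False using h(3) by simp
  qed
  then obtain h' \<nu> where h': "h' \<in> ?E" "\<nu> \<noteq> 0" "norm_L2 h' > 0"
    "norm_L2 (\<lambda>x. A h' x - \<nu> * h' x) = 0"
    using E.eigenvector_exists[of h] h by blast
  then have "poly p \<nu> = 0" using vanish by auto
  then have "norm_L2 (op_poly A p h') = 0" using op_poly_eigen[of h' \<nu> p] h' by simp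
  then have "norm_L2 (?S h') = 0"
    using bounded[OF P.maps_into[of h']] h'(1) norm_L2_nonneg[of "?S h'"] by simp
  then have "norm_L2 h' = 0"
    using norm_L2_zero_if_eigen_zero h h' subspace_L2 S.maps_into by blast
  then show False using h'(3) by simp
qed

section \<open>Hoelder continuous functions\<close>

definition holder_on_real :: "real \<Rightarrow> real \<Rightarrow> real set \<Rightarrow> (real \<Rightarrow> real) \<Rightarrow> bool" where
  "holder_on_real \<beta> C Q g \<longleftrightarrow> (\<forall>x\<in>Q. \<forall>y\<in>Q. \<bar>g x - g y\<bar> \<le> C * \<bar>x - y\<bar> powr \<beta>)"

lemma holder_modulus_small:
  fixes C \<beta> e :: real
  assumes "\<beta> > 0" "C \<ge> 0" "e > 0"
  obtains d where "d > 0" "\<And>z. 0 \<le> z \<Longrightarrow> z < d \<Longrightarrow> C * z powr \<beta> < e"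
proof
  show "0 < (e / (C + 1)) powr (1 / \<beta>)" using assms by simp
  fix z :: real assume z: "0 \<le> z" "z < (e / (C + 1)) powr (1 / \<beta>)"
  have "z powr \<beta> \<le> ((e / (C + 1)) powr (1 / \<beta>)) powr \<beta>"
    using z assms by (intro powr_mono2) auto
  also have "\<dots> = e / (C + 1)" using assms by (simp add: powr_powr)
  finally have "C * z powr \<beta> \<le> C * (e / (C + 1))" using assms by (intro mult_left_mono) auto
  also have "\<dots> < e" using assms by (simp add: field_simps)
  finally show "C * z powr \<beta> < e" .
qed

lemma holder_on_real_uniformly_continuous:
  assumes "holder_on_real \<beta> C Q g" "\<beta> > 0" "C \<ge> 0"
  shows "uniformly_continuous_on Q g"
  unfolding uniformly_continuous_on_def dist_real_def
proof (intro allI impI)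
  fix e :: real assume "e > 0"
  then obtain d where "d > 0" "\<And>z. 0 \<le> z \<Longrightarrow> z < d \<Longrightarrow> C * z powr \<beta> < e"
    using holder_modulus_small[OF assms(2,3)] by blast
  then show "\<exists>d>0. \<forall>x\<in>Q. \<forall>x'\<in>Q. \<bar>x' - x\<bar> < d \<longrightarrow> \<bar>g x' - g x\<bar> < e"
    using assms(1) unfolding holder_on_real_def by (meson abs_ge_zero le_less_trans)
qed

lemma holder_on_real_extend_closure:
  assumes hol: "holder_on_real \<beta> C Q g" and "\<beta> > 0" "C \<ge> 0"
    and bd: "\<And>x. x \<in> Q \<Longrightarrow> \<bar>g x\<bar> \<le> B"
  obtains g' where "\<And>x. x \<in> Q \<Longrightarrow> g' x = g x" "holder_on_real \<beta> C (closure Q) g'"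
    "\<And>x. x \<in> closure Q \<Longrightarrow> \<bar>g' x\<bar> \<le> B"
proof -
  obtain g' where g'uc: "uniformly_continuous_on (closure Q) g'"
    and g'eq: "\<And>x. x \<in> Q \<Longrightarrow> g x = g' x"
    by (rule uniformly_continuous_on_extension_on_closure[OF
        holder_on_real_uniformly_continuous[OF assms(1-3)]]) blast
  have cont: "continuous_on (closure Q) g'" using g'uc by (rule uniformly_continuous_imp_continuous)
  have "continuous_on (closure (Q \<times> Q))
      (\<lambda>p. \<bar>g' (fst p) - g' (snd p)\<bar> - C * \<bar>fst p - snd p\<bar> powr \<beta>)"
    unfolding closure_Times using \<open>\<beta> > 0\<close>
    by (intro continuous_intros continuous_on_compose2[OF cont] continuous_on_powr') auto
  then have "\<bar>g' x - g' y\<bar> - C * \<bar>x - y\<bar> powr \<beta> \<le> 0" if "x \<in> closure Q" "y \<in> closure Q" for x y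
    using continuous_le_on_closure[of "Q \<times> Q" _ "(x, y)" 0] that hol g'eq
    unfolding closure_Times holder_on_real_def by fastforce
  then have "holder_on_real \<beta> C (closure Q) g'" unfolding holder_on_real_def by simp
  moreover have "\<bar>g' x\<bar> \<le> B" if "x \<in> closure Q" for x
    using continuous_le_on_closure[of Q "\<lambda>x. \<bar>g' x\<bar>" x B] continuous_on_rabs[OF cont] that bd g'eq
    by fastforce
  ultimately show ?thesis using that g'eq by metis
qed

lemma uniform_limit_subseq:
  assumes "uniform_limit S f g sequentially" "strict_mono r"
  shows "uniform_limit S (\<lambda>n. f (r n)) g sequentially"
  using filterlim_compose[OF assms(1) filterlim_subseq[OF assms(2)]] .

lemma holder_on_real_uniform_subseq:
  assumes "bounded Q" "\<beta> > 0" "C \<ge> 0" "\<And>n. holder_on_real \<beta> C Q (F n)"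
    and "\<And>n x. x \<in> Q \<Longrightarrow> \<bar>F n x\<bar> \<le> B"
  obtains r g where "strict_mono (r :: nat \<Rightarrow> nat)" "uniform_limit Q (\<lambda>n. F (r n)) g sequentially"
proof -
  \<comment> \<open>\<open>Arzela_Ascoli\<close> needs a compact domain, hence the extension to the closure.\<close>
  have "\<exists>g'. (\<forall>x\<in>Q. g' x = F n x) \<and> holder_on_real \<beta> C (closure Q) g' \<and>
      (\<forall>x\<in>closure Q. \<bar>g' x\<bar> \<le> B)" for n
    using holder_on_real_extend_closure[OF assms(4)[of n] assms(2,3) assms(5)] by metis
  then obtain E where E: "\<And>n x. x \<in> Q \<Longrightarrow> E n x = F n x"
    "\<And>n. holder_on_real \<beta> C (closure Q) (E n)" "\<And>n x. x \<in> closure Q \<Longrightarrow> \<bar>E n x\<bar> \<le> B"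
    by metis
  obtain g r where r: "strict_mono (r :: nat \<Rightarrow> nat)"
    and conv: "\<And>e. 0 < e \<Longrightarrow> \<exists>N. \<forall>n x. n \<ge> N \<and> x \<in> closure Q \<longrightarrow> norm (E (r n) x - g x) < e"
  proof (rule Arzela_Ascoli[of "closure Q" E B])
    show "compact (closure Q)" using assms(1) by (simp add: compact_closure)
    show "norm (E n x) \<le> B" if "x \<in> closure Q" for n x using E(3)[OF that] by simp
    fix x e assume x: "x \<in> closure Q" and "(0::real) < e"
    then obtain d where "d > 0" "\<And>z. 0 \<le> z \<Longrightarrow> z < d \<Longrightarrow> C * z powr \<beta> < e"
      using holder_modulus_small[OF assms(2,3)] by blast
    then show "\<exists>d>0. \<forall>n y. y \<in> closure Q \<and> norm (x - y) < d \<longrightarrow> norm (E n x - E n y) < e"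
      using E(2) x unfolding holder_on_real_def by (metis abs_ge_zero le_less_trans real_norm_def)
  qed auto
  have "uniform_limit (closure Q) (\<lambda>n. E (r n)) g sequentially"
    unfolding uniform_limit_sequentially_iff dist_norm using conv by blast
  then have "uniform_limit Q (\<lambda>n. E (r n)) g sequentially"
    by (rule uniform_limit_on_subset) (rule closure_subset)
  then have "uniform_limit Q (\<lambda>n. F (r n)) g sequentially"
    by (subst (asm) uniform_limit_cong'[where g = "\<lambda>n. F (r n)" and i = g]) (auto simp: E(1))
  then show ?thesis using that r by blast
qed

lemma piecewise_holder_uniform_subseq:
  assumes "finite P" "\<And>Q. Q \<in> P \<Longrightarrow> bounded Q" "\<beta> > 0" "C \<ge> 0"
    and "\<And>Q n. Q \<in> P \<Longrightarrow> holder_on_real \<beta> C Q (F n)" "\<And>n x. \<bar>F n x\<bar> \<le> B"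
  shows "\<exists>(r :: nat \<Rightarrow> nat) g. strict_mono r \<and> uniform_limit (\<Union>P) (\<lambda>n. F (r n)) g sequentially"
  using assms(1,2,5)
proof (induction P rule: finite_induct)
  case empty
  show ?case by (intro exI[of _ id] exI[of _ "\<lambda>x. 0"]) (simp add: strict_mono_def)
next
  case (insert Q P)
  then obtain r g where r: "strict_mono (r :: nat \<Rightarrow> nat)"
    and lim: "uniform_limit (\<Union>P) (\<lambda>n. F (r n)) g sequentially"
    by auto
  obtain k gQ where k: "strict_mono (k :: nat \<Rightarrow> nat)"
    and limQ: "uniform_limit Q (\<lambda>n. F (r (k n))) gQ sequentially"
    using holder_on_real_uniform_subseq[of Q \<beta> C "\<lambda>n. F (r n)" B] insert.prems assms(3,4,6) by blast
  define g' where "g' x = (if x \<in> Q then gQ x else g x)" for x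
  have "uniform_limit Q (\<lambda>n. F (r (k n))) g' sequentially"
    using limQ by (subst uniform_limit_cong'[where i = gQ]) (auto simp: g'_def)
  moreover have "uniform_limit (\<Union>P - Q) (\<lambda>n. F (r (k n))) g' sequentially"
    using uniform_limit_on_subset[OF uniform_limit_subseq[OF lim k], of "\<Union>P - Q"]
    by (subst uniform_limit_cong'[where i = g]) (auto simp: g'_def)
  ultimately have "uniform_limit (Q \<union> (\<Union>P - Q)) (\<lambda>n. F (r (k n))) g' sequentially"
    by (rule uniform_limit_on_Un)
  moreover have "Q \<union> (\<Union>P - Q) = \<Union>(insert Q P)" by auto
  ultimately show ?case using strict_mono_o[OF r k] by (auto simp: o_def)
qed

lemma uniform_limit_L2_unit:
  assumes u: "\<And>n. L2_unit (u n)" and h0: "\<And>x. x \<notin> {0..1} \<Longrightarrow> h x = 0"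
    and lim: "uniform_limit {0..1} u h sequentially"
  shows "L2_unit h" "(\<lambda>n. norm_L2 (\<lambda>x. u n x - h x)) \<longlonglongrightarrow> 0"
proof -
  have close: "\<exists>N. \<forall>n\<ge>N. \<forall>x. \<bar>u n x - h x\<bar> \<le> e" if "e > 0" for e
  proof -
    obtain N where "\<forall>n\<ge>N. \<forall>x\<in>{0..1}. dist (u n x) (h x) < e"
      using lim \<open>e > 0\<close> unfolding uniform_limit_sequentially_iff by blast
    then show ?thesis using L2_unitD(3)[OF u] h0 \<open>e > 0\<close>
      by (metis dist_real_def less_eq_real_def diff_self abs_zero)
  qed
  have "(\<lambda>n. u n x) \<longlonglongrightarrow> h x" for x
    using close by (intro LIMSEQ_I) (metis dense real_norm_def le_less_trans)
  then have hm: "h \<in> borel_measurable lborel"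
    by (rule borel_measurable_LIMSEQ_real) (use L2_unitD(1)[OF u] in auto)
  obtain N where N: "\<And>n x. n \<ge> N \<Longrightarrow> \<bar>u n x - h x\<bar> \<le> 1" using close[of 1] by auto
  have diff: "L2_unit (\<lambda>x. h x - u N x)"
    using hm L2_unitD(1)[OF u] N[of N] h0 L2_unitD(3)[OF u]
    by (intro L2_unit_bounded[where B = 1]) (auto simp: abs_minus_commute)
  show h: "L2_unit h" using L2_unit_lin[OF diff u[of N], of 1 1] by simp
  show "(\<lambda>n. norm_L2 (\<lambda>x. u n x - h x)) \<longlonglongrightarrow> 0"
  proof (rule LIMSEQ_I)
    fix e :: real assume "e > 0"
    then obtain N where N: "\<And>n x. n \<ge> N \<Longrightarrow> \<bar>u n x - h x\<bar> \<le> e / 2"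
      using close[of "e / 2"] by auto
    have "norm_L2 (\<lambda>x. u n x - h x) \<le> e / 2" if "n \<ge> N" for n
      using N[OF that] u h by (intro norm_L2_le_bound) auto
    then show "\<exists>N. \<forall>n\<ge>N. norm (norm_L2 (\<lambda>x. u n x - h x) - 0) < e"
      using \<open>e > 0\<close> norm_L2_nonneg by fastforce
  qed
qed

lemma interval_contains_ball_near:
  fixes Q :: "real set"
  assumes "is_interval Q" "interior Q \<noteq> {}" "x \<in> Q" "d > 0"
  obtains y r where "r > 0" "ball y r \<subseteq> Q \<inter> ball x d"
proof -
  have "x \<in> closure (interior Q)"
    using convex_closure_interior[OF is_interval_convex[OF assms(1)] assms(2)] closure_subset assms(3)
    by auto
  then obtain y where y: "y \<in> interior Q" "dist y x < d / 2"
    using closure_approachable[of x "interior Q"] assms(4) by (meson half_gt_zero)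
  then obtain r where r: "r > 0" "ball y r \<subseteq> Q"
    using mem_interior by blast
  have "ball y (min r (d / 2)) \<subseteq> Q \<inter> ball x d"
  proof
    fix z assume z: "z \<in> ball y (min r (d / 2))"
    then have "z \<in> Q" using r by auto
    moreover have "dist x z < d"
      using z y(2) dist_triangle[of x z y] by (auto simp: dist_commute)
    ultimately show "z \<in> Q \<inter> ball x d" by auto
  qed
  moreover have "min r (d / 2) > 0" using r assms(4) by simp
  ultimately show ?thesis using that by blast
qed

lemma continuous_on_interval_AE_zero:
  fixes g :: "real \<Rightarrow> real"
  assumes "is_interval Q" "interior Q \<noteq> {}" "continuous_on Q g"
    and "AE x in lborel. g x = 0" "x \<in> Q"
  shows "g x = 0"
proof (rule ccontr)
  assume "g x \<noteq> 0"
  then obtain d where "d > 0" and d: "\<And>z. z \<in> Q \<Longrightarrow> dist z x < d \<Longrightarrow> dist (g z) (g x) < \<bar>g x\<bar>"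
    using assms(3,5) unfolding continuous_on_iff by (metis zero_less_abs_iff)
  obtain y r where "r > 0" and ball: "ball y r \<subseteq> Q \<inter> ball x d"
    using interval_contains_ball_near[OF assms(1,2,5) \<open>d > 0\<close>] by blast
  have "g z \<noteq> 0" if "z \<in> ball y r" for z
    using d[of z] ball that by (force simp: dist_commute dist_real_def)
  moreover obtain N where N: "{x \<in> space lborel. g x \<noteq> 0} \<subseteq> N" "emeasure lborel N = 0" "N \<in> sets lborel"
    using AE_E[OF assms(4)] by blast
  ultimately have "emeasure lborel (ball y r) \<le> emeasure lborel N"
    by (intro emeasure_mono) auto
  then show False using N(2) \<open>r > 0\<close> by (simp add: ball_eq_greaterThanLessThan)
qed

lemma holder_on_real_sum:
  assumes "finite I" "\<And>k. k \<in> I \<Longrightarrow> holder_on_real \<beta> M Q (g k)"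
  shows "holder_on_real \<beta> (\<Sum>k\<in>I. \<bar>c k\<bar> * M) Q (\<lambda>y. \<Sum>k\<in>I. c k * g k y)"
  unfolding holder_on_real_def
proof (intro ballI)
  fix y y' assume "y \<in> Q" "y' \<in> Q"
  have "(\<Sum>k\<in>I. c k * g k y) - (\<Sum>k\<in>I. c k * g k y') = (\<Sum>k\<in>I. c k * (g k y - g k y'))"
    by (simp add: sum_subtractf right_diff_distrib)
  then have "\<bar>(\<Sum>k\<in>I. c k * g k y) - (\<Sum>k\<in>I. c k * g k y')\<bar>
      \<le> (\<Sum>k\<in>I. \<bar>c k\<bar> * \<bar>g k y - g k y'\<bar>)"
    using sum_abs[of "\<lambda>k. c k * (g k y - g k y')" I] by (simp add: abs_mult)
  also have "\<dots> \<le> (\<Sum>k\<in>I. \<bar>c k\<bar> * (M * \<bar>y - y'\<bar> powr \<beta>))"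
    using assms(2) \<open>y \<in> Q\<close> \<open>y' \<in> Q\<close> unfolding holder_on_real_def
    by (intro sum_mono mult_left_mono) auto
  finally show "\<bar>(\<Sum>k\<in>I. c k * g k y) - (\<Sum>k\<in>I. c k * g k y')\<bar>
      \<le> (\<Sum>k\<in>I. \<bar>c k\<bar> * M) * \<bar>y - y'\<bar> powr \<beta>"
    by (simp add: sum_distrib_right mult.assoc)
qed

lemma piecewise_holder_AE_zero:
  assumes "\<Union>P = {0..1}" "\<And>Q. Q \<in> P \<Longrightarrow> is_interval Q" "\<And>Q. Q \<in> P \<Longrightarrow> interior Q \<noteq> {}"
    and "\<beta> > 0" "C \<ge> 0" "\<And>Q. Q \<in> P \<Longrightarrow> holder_on_real \<beta> C Q g"
    and "AE x in lborel. g x = 0" "x \<in> {0..1}"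
  shows "g x = 0"
proof -
  obtain Q where "Q \<in> P" "x \<in> Q" using assms(1,8) by blast
  then show ?thesis
    using continuous_on_interval_AE_zero[OF assms(2,3) _ assms(7)]
      uniformly_continuous_imp_continuous[OF holder_on_real_uniformly_continuous[OF assms(6) assms(4,5)]]
    by blast
qed

section \<open>Integral operators\<close>

definition bounded_kernel :: "(real \<Rightarrow> real \<Rightarrow> real) \<Rightarrow> bool" where
  "bounded_kernel K \<longleftrightarrow> case_prod K \<in> borel_measurable (lborel \<Otimes>\<^sub>M lborel) \<and>
     (\<forall>x y. \<bar>K x y\<bar> \<le> 1) \<and> (\<forall>x y. x \<notin> {0..1} \<or> y \<notin> {0..1} \<longrightarrow> K x y = 0)"

definition integral_op :: "(real \<Rightarrow> real \<Rightarrow> real) \<Rightarrow> (real \<Rightarrow> real) \<Rightarrow> real \<Rightarrow> real" where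
  "integral_op K f = (\<lambda>x. \<integral>y. K x y * f y \<partial>lborel)"

lemma bounded_kernelD:
  assumes "bounded_kernel K"
  shows "case_prod K \<in> borel_measurable (lborel \<Otimes>\<^sub>M lborel)" "\<And>x y. \<bar>K x y\<bar> \<le> 1"
    "\<And>x y. x \<notin> {0..1} \<Longrightarrow> K x y = 0" "\<And>x y. y \<notin> {0..1} \<Longrightarrow> K x y = 0"
  using assms unfolding bounded_kernel_def by auto

lemma bounded_kernel_measurable_row:
  assumes "bounded_kernel K" shows "K x \<in> borel_measurable lborel"
proof -
  have "(\<lambda>y. case_prod K (x, y)) \<in> borel_measurable lborel"
    using bounded_kernelD(1)[OF assms] by measurable
  then show ?thesis by simp
qed

lemma bounded_kernel_measurable_column:
  assumes "bounded_kernel K" shows "(\<lambda>t. K t y) \<in> borel_measurable lborel"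
proof -
  have "(\<lambda>t. case_prod K (t, y)) \<in> borel_measurable lborel"
    using bounded_kernelD(1)[OF assms] by measurable
  then show ?thesis by simp
qed

lemma integral_op_integrable:
  assumes "bounded_kernel K" "L2_unit f"
  shows "integrable lborel (\<lambda>y. K x y * f y)"
proof (rule Bochner_Integration.integrable_bound[of _ "\<lambda>y. \<bar>f y\<bar>"])
  show "integrable lborel (\<lambda>y. \<bar>f y\<bar>)" using L2_unit_integrable[OF assms(2)] by simp
  show "(\<lambda>y. K x y * f y) \<in> borel_measurable lborel"
    using bounded_kernel_measurable_row[OF assms(1)] L2_unitD(1)[OF assms(2)] by measurable
  show "AE y in lborel. norm (K x y * f y) \<le> norm \<bar>f y\<bar>"
    using bounded_kernelD(2)[OF assms(1)] by (intro AE_I2) (simp add: abs_mult mult_left_le_one_le)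
qed

lemma integral_abs_kernel_le_norm_L2:
  assumes "bounded_kernel K" "L2_unit f"
  shows "(\<integral>y. \<bar>K x y * f y\<bar> \<partial>lborel) \<le> norm_L2 f"
proof -
  have "(\<integral>y. \<bar>K x y * f y\<bar> \<partial>lborel) \<le> (\<integral>y. \<bar>f y\<bar> \<partial>lborel)"
    using integral_op_integrable[OF assms] L2_unit_integrable[OF assms(2)] bounded_kernelD(2)[OF assms(1)]
    by (intro Bochner_Integration.integral_mono integrable_abs)
      (simp_all add: abs_mult mult_left_le_one_le)
  then show ?thesis using integral_abs_le_norm_L2[OF assms(2)] by linarith
qed

lemma integral_op_bound:
  assumes "bounded_kernel K" "L2_unit f"
  shows "\<bar>integral_op K f x\<bar> \<le> norm_L2 f"
  unfolding integral_op_def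
  using integral_abs_bound[of lborel "\<lambda>y. K x y * f y"] integral_abs_kernel_le_norm_L2[OF assms, where x = x]
  by linarith

lemma integral_op_outside: "bounded_kernel K \<Longrightarrow> x \<notin> {0..1} \<Longrightarrow> integral_op K f x = 0"
  unfolding integral_op_def by (simp add: bounded_kernelD(3))

lemma integral_op_L2:
  assumes "bounded_kernel K" "L2_unit f"
  shows "L2_unit (integral_op K f)"
proof (rule L2_unit_bounded)
  have [measurable]: "case_prod K \<in> borel_measurable (lborel \<Otimes>\<^sub>M lborel)"
    "f \<in> borel_measurable lborel"
    using bounded_kernelD(1)[OF assms(1)] L2_unitD(1)[OF assms(2)] by auto
  have "case_prod (\<lambda>x y. K x y * f y) \<in> borel_measurable (lborel \<Otimes>\<^sub>M lborel)"
    by measurable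
  then show "integral_op K f \<in> borel_measurable lborel"
    unfolding integral_op_def by (rule lborel.borel_measurable_lebesgue_integral)
qed (use integral_op_bound[OF assms] integral_op_outside[OF assms(1)] in auto)

lemma integral_op_norm_le:
  assumes "bounded_kernel K" "L2_unit f"
  shows "norm_L2 (integral_op K f) \<le> norm_L2 f"
  using integral_op_L2[OF assms] integral_op_bound[OF assms] by (rule norm_L2_le_bound)

lemma integral_op_lin:
  assumes "bounded_kernel K" "L2_unit f" "L2_unit g"
  shows "integral_op K (\<lambda>x. c * f x + d * g x) = (\<lambda>x. c * integral_op K f x + d * integral_op K g x)"
  unfolding integral_op_def
  using integral_op_integrable[OF assms(1,2)] integral_op_integrable[OF assms(1,3)]
  by (simp add: algebra_simps)

lemma integral_op_bounded_linear:
  assumes "bounded_kernel K"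
  shows "bounded_linear_L2_op {f. L2_unit f} (integral_op K) 1"
  by (intro bounded_linear_L2_op.intro closed_L2_subspace_UNIV bounded_linear_L2_op_axioms.intro)
    (use integral_op_L2 integral_op_lin integral_op_norm_le assms in auto)

lemma kernel_pair_integrable:
  assumes K: "bounded_kernel K" and f: "L2_unit f" and g: "integrable lborel g"
  shows "integrable (lborel \<Otimes>\<^sub>M lborel) (\<lambda>(x, y). g x * (K x y * f y))"
proof (rule lborel_pair.Fubini_integrable)
  have [measurable]: "case_prod K \<in> borel_measurable (lborel \<Otimes>\<^sub>M lborel)"
    "f \<in> borel_measurable lborel" "g \<in> borel_measurable lborel"
    using bounded_kernelD(1)[OF K] L2_unitD(1)[OF f] borel_measurable_integrable[OF g] by auto
  show "(\<lambda>(x, y). g x * (K x y * f y)) \<in> borel_measurable (lborel \<Otimes>\<^sub>M lborel)" by measurable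
  show "AE x in lborel. integrable lborel (\<lambda>y. (\<lambda>(x, y). g x * (K x y * f y)) (x, y))"
    using integral_op_integrable[OF K f] by simp
  show "integrable lborel (\<lambda>x. \<integral>y. norm ((\<lambda>(x, y). g x * (K x y * f y)) (x, y)) \<partial>lborel)"
  proof (rule Bochner_Integration.integrable_bound[of _ "\<lambda>x. norm_L2 f * \<bar>g x\<bar>"])
    show "integrable lborel (\<lambda>x. norm_L2 f * \<bar>g x\<bar>)" using g by simp
    show "(\<lambda>x. \<integral>y. norm ((\<lambda>(x, y). g x * (K x y * f y)) (x, y)) \<partial>lborel) \<in> borel_measurable lborel"
      by measurable
    have "(\<integral>y. norm ((\<lambda>(x, y). g x * (K x y * f y)) (x, y)) \<partial>lborel)
        = \<bar>g x\<bar> * (\<integral>y. \<bar>K x y * f y\<bar> \<partial>lborel)" for x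
      by (simp add: abs_mult)
    also have "\<dots> x \<le> \<bar>g x\<bar> * norm_L2 f" for x
      by (rule mult_left_mono[OF integral_abs_kernel_le_norm_L2[OF K f]]) simp
    finally show "AE x in lborel. norm (\<integral>y. norm ((\<lambda>(x, y). g x * (K x y * f y)) (x, y)) \<partial>lborel)
        \<le> norm (norm_L2 f * \<bar>g x\<bar>)"
      using norm_L2_nonneg[of f] by (intro AE_I2) (simp add: mult.commute)
  qed
qed

lemma integral_op_selfadjoint:
  assumes K: "bounded_kernel K" and f: "L2_unit f" and g: "L2_unit g"
    and sym: "\<And>x y. K x y = K y x"
  shows "inner_L2 (integral_op K f) g = inner_L2 f (integral_op K g)"
proof -
  have "inner_L2 (integral_op K f) g = (\<integral>x. (\<integral>y. g x * (K x y * f y) \<partial>lborel) \<partial>lborel)"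
    unfolding inner_L2_def integral_op_def by (simp add: mult.commute)
  also have "\<dots> = (\<integral>y. (\<integral>x. g x * (K x y * f y) \<partial>lborel) \<partial>lborel)"
    using lborel_pair.Fubini_integral[OF kernel_pair_integrable[OF K f L2_unit_integrable[OF g]]]
    by simp
  also have "\<dots> = inner_L2 f (integral_op K g)"
    unfolding inner_L2_def integral_op_def by (simp add: sym ac_simps)
  finally show ?thesis .
qed

lemma integral_op_compose:
  assumes K: "bounded_kernel K" and L: "bounded_kernel L" and f: "L2_unit f"
  shows "integral_op K (integral_op L f) x = (\<integral>y. (\<integral>t. K x t * L t y \<partial>lborel) * f y \<partial>lborel)"
proof -
  have "integrable lborel (K x)"
    using L2_unit_integrable[OF L2_unit_bounded[of "K x" 1]] bounded_kernelD[OF K]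
      bounded_kernel_measurable_row[OF K] by blast
  then have "integral_op K (integral_op L f) x = (\<integral>t. (\<integral>y. K x t * (L t y * f y) \<partial>lborel) \<partial>lborel)"
    unfolding integral_op_def by simp
  also have "\<dots> = (\<integral>y. (\<integral>t. K x t * (L t y * f y) \<partial>lborel) \<partial>lborel)"
    using lborel_pair.Fubini_integral[OF kernel_pair_integrable[OF L f \<open>integrable lborel (K x)\<close>]]
    by simp
  also have "\<dots> = (\<integral>y. (\<integral>t. K x t * L t y \<partial>lborel) * f y \<partial>lborel)"
    by (simp only: mult.assoc[symmetric] integral_mult_left_zero)
  finally show ?thesis .
qed

lemma integral_op_holder:
  assumes K: "bounded_kernel K" and f: "L2_unit f"
    and row: "\<And>t. holder_on_real \<beta> M Q (\<lambda>x. K x t)" and "M \<ge> 0"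
  shows "holder_on_real \<beta> (M * norm_L2 f) Q (integral_op K f)"
  unfolding holder_on_real_def
proof (intro ballI)
  fix x x' assume xQ: "x \<in> Q" "x' \<in> Q"
  have i: "integrable lborel (\<lambda>t. K z t * f t)" for z by (rule integral_op_integrable[OF K f])
  have "\<bar>integral_op K f x - integral_op K f x'\<bar> = \<bar>\<integral>t. (K x t - K x' t) * f t \<partial>lborel\<bar>"
    unfolding integral_op_def using i[of x] i[of x'] by (simp add: left_diff_distrib)
  also have "\<dots> \<le> (\<integral>t. \<bar>(K x t - K x' t) * f t\<bar> \<partial>lborel)" by (rule integral_abs_bound)
  also have "\<dots> \<le> (\<integral>t. (M * \<bar>x - x'\<bar> powr \<beta>) * \<bar>f t\<bar> \<partial>lborel)"
  proof (rule Bochner_Integration.integral_mono)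
    show "integrable lborel (\<lambda>t. \<bar>(K x t - K x' t) * f t\<bar>)"
      using i[of x] i[of x'] by (simp add: left_diff_distrib)
    show "integrable lborel (\<lambda>t. M * \<bar>x - x'\<bar> powr \<beta> * \<bar>f t\<bar>)"
      using L2_unit_integrable[OF f] by simp
    show "\<bar>(K x t - K x' t) * f t\<bar> \<le> M * \<bar>x - x'\<bar> powr \<beta> * \<bar>f t\<bar>" for t
      using row[of t] xQ unfolding abs_mult holder_on_real_def by (intro mult_right_mono) auto
  qed
  also have "\<dots> \<le> (M * \<bar>x - x'\<bar> powr \<beta>) * norm_L2 f"
    using integral_abs_le_norm_L2[OF f] \<open>M \<ge> 0\<close> by (simp add: mult_left_mono)
  finally show "\<bar>integral_op K f x - integral_op K f x'\<bar> \<le> M * norm_L2 f * \<bar>x - x'\<bar> powr \<beta>"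
    by (simp add: ac_simps)
qed

lemma integral_op_compact:
  assumes K: "bounded_kernel K" and "finite P" "\<Union>P = {0..1}" "\<beta> > 0" "M \<ge> 0"
    and row: "\<And>Q t. Q \<in> P \<Longrightarrow> holder_on_real \<beta> M Q (\<lambda>x. K x t)"
    and F: "\<And>n. L2_unit (F n)" "\<And>n. norm_L2 (F n) \<le> 1"
  shows "\<exists>(r :: nat \<Rightarrow> nat) h. strict_mono r \<and> L2_unit h \<and>
    (\<lambda>n. norm_L2 (\<lambda>x. integral_op K (F (r n)) x - h x)) \<longlonglongrightarrow> 0"
proof -
  have "holder_on_real \<beta> M Q (integral_op K (F n))" if "Q \<in> P" for Q n
    using integral_op_holder[OF K F(1) row[OF that] \<open>M \<ge> 0\<close>] F(2)[of n] \<open>M \<ge> 0\<close>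
    unfolding holder_on_real_def
    by (meson mult_right_mono mult_left_le order_trans powr_ge_zero)
  moreover have "\<bar>integral_op K (F n) x\<bar> \<le> 1" for n x
    using integral_op_bound[OF K F(1)] F(2) order_trans by blast
  moreover have "bounded Q" if "Q \<in> P" for Q
    using that \<open>\<Union>P = {0..1}\<close> by (metis Sup_upper bounded_closed_interval bounded_subset)
  ultimately obtain r g where r: "strict_mono (r :: nat \<Rightarrow> nat)"
    and lim: "uniform_limit {0..1} (\<lambda>n. integral_op K (F (r n))) g sequentially"
    using piecewise_holder_uniform_subseq[OF \<open>finite P\<close> _ \<open>\<beta> > 0\<close> \<open>M \<ge> 0\<close>, of "\<lambda>n. integral_op K (F n)" 1]
      \<open>\<Union>P = {0..1}\<close> by metis
  define h where "h x = (if x \<in> {0..1} then g x else 0)" for x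
  have "uniform_limit {0..1} (\<lambda>n. integral_op K (F (r n))) h sequentially"
    using lim by (subst uniform_limit_cong'[where i = g]) (auto simp: h_def)
  moreover have "h x = 0" if "x \<notin> {0..1}" for x using that unfolding h_def by auto
  ultimately have "L2_unit h" "(\<lambda>n. norm_L2 (\<lambda>x. integral_op K (F (r n)) x - h x)) \<longlonglongrightarrow> 0"
    using uniform_limit_L2_unit[of "\<lambda>n. integral_op K (F (r n))" h] integral_op_L2[OF K F(1)]
    by auto
  then show ?thesis using r by blast
qed

lemma integral_op_compact_selfadjoint:
  assumes K: "bounded_kernel K" and sym: "\<And>x y. K x y = K y x"
    and "finite P" "\<Union>P = {0..1}" "\<beta> > 0" "M \<ge> 0"
    and row: "\<And>Q t. Q \<in> P \<Longrightarrow> holder_on_real \<beta> M Q (\<lambda>x. K x t)"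
  shows "compact_selfadjoint_L2_op {f. L2_unit f} (integral_op K) 1"
proof (rule compact_selfadjoint_L2_op.intro[OF integral_op_bounded_linear[OF K]], unfold_locales)
  show "inner_L2 (integral_op K f) g = inner_L2 f (integral_op K g)"
    if "f \<in> {f. L2_unit f}" "g \<in> {f. L2_unit f}" for f g
    using integral_op_selfadjoint[OF K _ _ sym] that by simp
  show "\<exists>(r :: nat \<Rightarrow> nat) h. strict_mono r \<and> L2_unit h \<and>
      (\<lambda>n. norm_L2 (\<lambda>x. integral_op K (F (r n)) x - h x)) \<longlonglongrightarrow> 0"
    if "\<And>n. F n \<in> {f. L2_unit f}" "\<And>n. norm_L2 (F n) \<le> 1" for F
    by (rule integral_op_compact[OF K assms(3-6) row]) (use that in auto)
qed

lemma graphon_moment_Suc_Suc: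
  assumes "bounded_kernel K"
  shows "graphon_moment K (Suc (Suc k)) x y = (\<integral>t. K x t * graphon_moment K (Suc k) t y \<partial>lborel)"
  unfolding graphon_moment.simps set_lebesgue_integral_def
proof (rule Bochner_Integration.integral_cong)
  fix t
  show "indicator {0..1} t *\<^sub>R (K x t * graphon_moment K (Suc k) t y) = K x t * graphon_moment K (Suc k) t y"
    by (cases "t \<in> {0..1}") (simp_all add: bounded_kernelD(4)[OF assms])
qed simp

lemma bounded_kernel_graphon_moment:
  assumes K: "bounded_kernel K"
  shows "bounded_kernel (graphon_moment K (Suc k))"
proof (induction k)
  case 0
  then show ?case using K by simp
next
  case (Suc k)
  let ?G = "graphon_moment K (Suc k)"
  have [measurable]: "case_prod K \<in> borel_measurable (lborel \<Otimes>\<^sub>M lborel)"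
    "case_prod ?G \<in> borel_measurable (lborel \<Otimes>\<^sub>M lborel)"
    using bounded_kernelD(1)[OF K] bounded_kernelD(1)[OF Suc] by auto
  have "(\<lambda>p. \<integral>t. K (fst p) t * ?G t (snd p) \<partial>lborel) \<in> borel_measurable (lborel \<Otimes>\<^sub>M lborel)"
    by (rule lborel.borel_measurable_lebesgue_integral) measurable
  moreover have "case_prod (graphon_moment K (Suc (Suc k)))
      = (\<lambda>p. \<integral>t. K (fst p) t * ?G t (snd p) \<partial>lborel)"
    by (auto simp: fun_eq_iff graphon_moment_Suc_Suc[OF K] simp del: graphon_moment.simps)
  moreover have "\<bar>graphon_moment K (Suc (Suc k)) x y\<bar> \<le> 1" for x y
  proof -
    have "L2_unit (\<lambda>t. ?G t y)"
      using bounded_kernel_measurable_column[OF Suc] bounded_kernelD(2,3)[OF Suc]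
      by (intro L2_unit_bounded) auto
    then have "\<bar>integral_op K (\<lambda>t. ?G t y) x\<bar> \<le> norm_L2 (\<lambda>t. ?G t y)"
      by (rule integral_op_bound[OF K])
    also have "\<dots> \<le> 1"
      using \<open>L2_unit (\<lambda>t. ?G t y)\<close> bounded_kernelD(2)[OF Suc] by (intro norm_L2_le_bound) auto
    finally show ?thesis
      by (simp add: graphon_moment_Suc_Suc[OF K] integral_op_def del: graphon_moment.simps)
  qed
  moreover have "graphon_moment K (Suc (Suc k)) x y = 0" if "x \<notin> {0..1} \<or> y \<notin> {0..1}" for x y
    using that bounded_kernelD(3)[OF K] bounded_kernelD(4)[OF Suc]
    by (auto simp: graphon_moment_Suc_Suc[OF K] simp del: graphon_moment.simps)
  ultimately show ?case unfolding bounded_kernel_def by auto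
qed

lemma integral_op_funpow_eq_moment:
  assumes K: "bounded_kernel K" and f: "L2_unit f"
  shows "(integral_op K ^^ Suc k) f = integral_op (graphon_moment K (Suc k)) f"
proof (induction k)
  case (Suc k)
  have "(integral_op K ^^ Suc (Suc k)) f = integral_op K (integral_op (graphon_moment K (Suc k)) f)"
    using Suc by simp
  also have "\<dots> = integral_op (graphon_moment K (Suc (Suc k))) f"
    unfolding fun_eq_iff integral_op_compose[OF K bounded_kernel_graphon_moment[OF K] f]
    by (simp add: integral_op_def graphon_moment_Suc_Suc[OF K] del: graphon_moment.simps)
  finally show ?case .
qed simp

lemma graphon_moment_column_holder:
  assumes K: "bounded_kernel K" and "M \<ge> 0" and col: "\<And>t. holder_on_real \<beta> M Q (K t)"
  shows "holder_on_real \<beta> M Q (graphon_moment K (Suc k) x)"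
proof (induction k arbitrary: x)
  case 0
  then show ?case using col by simp
next
  case (Suc k)
  let ?G = "graphon_moment K (Suc k)"
  show ?case unfolding holder_on_real_def
  proof (intro ballI)
    fix y y' assume yQ: "y \<in> Q" "y' \<in> Q"
    have col_L2: "L2_unit (\<lambda>t. ?G t z)" for z
      using bounded_kernel_measurable_column[OF bounded_kernel_graphon_moment[OF K]]
        bounded_kernelD(2,3)[OF bounded_kernel_graphon_moment[OF K]]
      by (intro L2_unit_bounded) auto
    have "graphon_moment K (Suc (Suc k)) x y - graphon_moment K (Suc (Suc k)) x y'
        = integral_op K (\<lambda>t. ?G t y - ?G t y') x"
      unfolding graphon_moment_Suc_Suc[OF K] integral_op_def
      using integral_op_integrable[OF K col_L2[of y]] integral_op_integrable[OF K col_L2[of y']]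
      by (simp add: right_diff_distrib)
    also have "\<bar>\<dots>\<bar> \<le> M * \<bar>y - y'\<bar> powr \<beta>"
    proof (rule order_trans[OF integral_op_bound[OF K]])
      show "L2_unit (\<lambda>t. ?G t y - ?G t y')" using col_L2 by auto
      show "norm_L2 (\<lambda>t. ?G t y - ?G t y') \<le> M * \<bar>y - y'\<bar> powr \<beta>"
        using col_L2 Suc[of t for t] yQ unfolding holder_on_real_def
        by (intro norm_L2_le_bound) auto
    qed
    finally show "\<bar>graphon_moment K (Suc (Suc k)) x y - graphon_moment K (Suc (Suc k)) x y'\<bar>
        \<le> M * \<bar>y - y'\<bar> powr \<beta>" .
  qed
qed

definition op_poly_kernel :: "(real \<Rightarrow> real \<Rightarrow> real) \<Rightarrow> real poly \<Rightarrow> real \<Rightarrow> real \<Rightarrow> real" where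
  "op_poly_kernel K p x y = (\<Sum>k\<le>degree p. coeff p k * graphon_moment K (Suc k) x y)"

lemma integral_op_op_poly:
  assumes K: "bounded_kernel K" and f: "L2_unit f"
  shows "integral_op K (op_poly (integral_op K) p f) = integral_op (op_poly_kernel K p) f"
proof -
  interpret T: bounded_linear_L2_op "{f. L2_unit f}" "integral_op K" 1
    by (rule integral_op_bounded_linear[OF K])
  have "L2_unit ((integral_op K ^^ k) f)" for k using T.funpow_maps_into[of f k] f by simp
  then have "integral_op K (op_poly (integral_op K) p f)
      = (\<lambda>x. \<Sum>k\<le>degree p. coeff p k * integral_op (graphon_moment K (Suc k)) f x)"
    unfolding op_poly_def
    by (subst T.op_sum) (auto simp flip: integral_op_funpow_eq_moment[OF K f])
  also have "\<dots> = integral_op (op_poly_kernel K p) f"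
    unfolding integral_op_def op_poly_kernel_def
    using integral_op_integrable[OF bounded_kernel_graphon_moment[OF K] f]
    by (simp add: sum_distrib_right mult.assoc)
  finally show ?thesis .
qed

lemma op_poly_kernel_row_L2:
  assumes K: "bounded_kernel K"
  shows "L2_unit (op_poly_kernel K p x)"
  unfolding op_poly_kernel_def
  using bounded_kernel_measurable_row[OF bounded_kernel_graphon_moment[OF K]]
    bounded_kernelD(2,4)[OF bounded_kernel_graphon_moment[OF K]]
  by (intro L2_unit_bounded[where B = "\<Sum>k\<le>degree p. \<bar>coeff p k\<bar>"] borel_measurable_sum
      borel_measurable_times borel_measurable_const order_trans[OF sum_abs] sum_mono)
    (auto simp: abs_mult intro: mult_right_le_one_le)

lemma op_poly_kernel_column_holder:
  assumes K: "bounded_kernel K" and "M \<ge> 0" and col: "\<And>t. holder_on_real \<beta> M Q (K t)"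
  shows "holder_on_real \<beta> (\<Sum>k\<le>degree p. \<bar>coeff p k\<bar> * M) Q (op_poly_kernel K p x)"
  unfolding op_poly_kernel_def
  by (intro holder_on_real_sum graphon_moment_column_holder[OF K \<open>M \<ge> 0\<close> col]) auto

section \<open>Graphons\<close>

definition graphon_kernel :: "(real \<Rightarrow> real \<Rightarrow> real) \<Rightarrow> real \<Rightarrow> real \<Rightarrow> real" where
  "graphon_kernel W x y = (if x \<in> {0..1} \<and> y \<in> {0..1} then W x y else 0)"

lemma graphon_kernel_commute: "graphon W \<Longrightarrow> graphon_kernel W x y = graphon_kernel W y x"
  unfolding graphon_kernel_def graphon_def by auto

lemma bounded_kernel_graphon_kernel:
  assumes "graphon W"
  shows "bounded_kernel (graphon_kernel W)"
proof -
  have "{0..1::real} \<times> {0..1::real} \<in> sets (lborel \<Otimes>\<^sub>M lborel)"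
    by (rule pair_measureI) auto
  then have "case_prod W \<in> borel_measurable (restrict_space (lborel \<Otimes>\<^sub>M lborel) ({0..1} \<times> {0..1}))
      \<longleftrightarrow> (\<lambda>p. indicator ({0..1::real} \<times> {0..1::real}) p *\<^sub>R case_prod W p)
        \<in> borel_measurable (lborel \<Otimes>\<^sub>M lborel)"
    by (intro borel_measurable_restrict_space_iff) simp
  then have "(\<lambda>p. indicator ({0..1::real} \<times> {0..1::real}) p *\<^sub>R case_prod W p)
      \<in> borel_measurable (lborel \<Otimes>\<^sub>M lborel)"
    using assms unfolding graphon_def by blast
  moreover have "(\<lambda>p. indicator ({0..1} \<times> {0..1}) p *\<^sub>R case_prod W p) = case_prod (graphon_kernel W)"
    by (auto simp: graphon_kernel_def fun_eq_iff indicator_def)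
  ultimately show ?thesis
    using assms unfolding bounded_kernel_def graphon_def graphon_kernel_def by auto
qed

lemma graphon_moment_graphon_kernel:
  assumes "x \<in> {0..1}" "y \<in> {0..1}"
  shows "graphon_moment W (Suc k) x y = graphon_moment (graphon_kernel W) (Suc k) x y"
  using assms
proof (induction k arbitrary: x y)
  case 0
  then show ?case by (simp add: graphon_kernel_def)
next
  case (Suc k)
  have "W x t = graphon_kernel W x t" if "t \<in> {0..1}" for t
    using Suc.prems that by (simp add: graphon_kernel_def)
  then show ?case unfolding graphon_moment.simps
    by (intro set_lebesgue_integral_cong) (use Suc in auto)
qed

lemma graphon_eigenvalue_if_eigenvector:
  assumes "graphon W" and h: "L2_unit h" "norm_L2 h > 0" and "\<nu> \<noteq> 0"
    and eigen: "norm_L2 (\<lambda>x. integral_op (graphon_kernel W) h x - \<nu> * h x) = 0"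
  shows "\<nu> \<in> graphon_eigenvalues W"
  unfolding graphon_eigenvalues_def
proof (intro CollectI conjI exI[of _ h])
  show "\<nu> \<noteq> 0" by fact
  show "h \<in> borel_measurable lborel" using L2_unitD(1)[OF h(1)] .
  have "(\<lambda>x. indicator {0..1} x *\<^sub>R (h x)\<^sup>2) = (\<lambda>x. (h x)\<^sup>2)"
    using L2_unitD(3)[OF h(1)] by (auto simp: indicator_def fun_eq_iff)
  then show "set_integrable lborel {0..1} (\<lambda>y. (h y)\<^sup>2)"
    unfolding set_integrable_def using L2_unitD(2)[OF h(1)] by simp
  show "\<not> (AE x in lborel. x \<in> {0..1} \<longrightarrow> h x = 0)"
  proof
    assume "AE x in lborel. x \<in> {0..1} \<longrightarrow> h x = 0"
    then have "AE x in lborel. h x = 0" by eventually_elim (use L2_unitD(3)[OF h(1)] in blast)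
    then show False using norm_L2_eq_0_iff_AE[OF h(1)] h(2) by simp
  qed
  have "L2_unit (\<lambda>x. integral_op (graphon_kernel W) h x - \<nu> * h x)"
    using integral_op_L2[OF bounded_kernel_graphon_kernel[OF \<open>graphon W\<close>] h(1)] h(1) by auto
  then have "AE x in lborel. integral_op (graphon_kernel W) h x - \<nu> * h x = 0"
    using eigen norm_L2_eq_0_iff_AE by blast
  then show "AE x in lborel. x \<in> {0..1} \<longrightarrow> (LINT y:{0..1}|lborel. W x y * h y) = \<nu> * h x"
  proof eventually_elim
    case (elim x)
    have "(LINT y:{0..1}|lborel. W x y * h y) = integral_op (graphon_kernel W) h x" if "x \<in> {0..1}"
      unfolding set_lebesgue_integral_def integral_op_def
      using that L2_unitD(3)[OF h(1)]
      by (intro Bochner_Integration.integral_cong) (auto simp: graphon_kernel_def indicator_def)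
    then show ?case using elim by simp
  qed
qed

locale holder_graphon =
  fixes W :: "real \<Rightarrow> real \<Rightarrow> real" and P :: "real set set" and \<beta> M :: real
  assumes graphon: "graphon W"
    and finite_partition: "finite P" and partition_cover: "\<Union>P = {0..1}"
    and part_interval: "\<And>Q. Q \<in> P \<Longrightarrow> is_interval Q"
    and part_interior: "\<And>Q. Q \<in> P \<Longrightarrow> interior Q \<noteq> {}"
    and exponent_pos: "\<beta> > 0" and constant_nonneg: "M \<ge> 0"
    and kernel_holder: "\<And>Q t. Q \<in> P \<Longrightarrow> holder_on_real \<beta> M Q (\<lambda>x. graphon_kernel W x t)"
begin

lemma kernel: "bounded_kernel (graphon_kernel W)"
  by (rule bounded_kernel_graphon_kernel[OF graphon])

sublocale T: compact_selfadjoint_L2_op "{f. L2_unit f}" "integral_op (graphon_kernel W)" 1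
  by (rule integral_op_compact_selfadjoint[OF kernel graphon_kernel_commute[OF graphon]
        finite_partition partition_cover exponent_pos constant_nonneg kernel_holder])

lemma piecewise_holder_zero:
  assumes "C \<ge> 0" "\<And>Q. Q \<in> P \<Longrightarrow> holder_on_real \<beta> C Q g" "AE x in lborel. g x = 0" "x \<in> {0..1}"
  shows "g x = 0"
  by (rule piecewise_holder_AE_zero[OF partition_cover part_interval part_interior exponent_pos assms])

lemma eigenvalue_poly_annihilates_AE:
  assumes "\<And>\<mu>. \<mu> \<in> graphon_eigenvalues W \<Longrightarrow> poly p \<mu> = 0" and f: "L2_unit f"
  shows "AE x in lborel. integral_op (op_poly_kernel (graphon_kernel W) p) f x = 0"
proof -
  have "L2_unit (op_poly (integral_op (graphon_kernel W)) p f)"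
    using bounded_linear_L2_op.maps_into[OF T.op_poly_bounded_linear] f by blast
  moreover have "norm_L2 (integral_op (graphon_kernel W) (op_poly (integral_op (graphon_kernel W)) p f)) = 0"
    using f by (intro T.eigenvalue_poly_annihilates assms graphon_eigenvalue_if_eigenvector[OF graphon]) auto
  ultimately show ?thesis
    using norm_L2_eq_0_iff_AE integral_op_L2[OF kernel] integral_op_op_poly[OF kernel f] by metis
qed

theorem op_poly_kernel_vanishes:
  assumes vanish: "\<And>\<mu>. \<mu> \<in> graphon_eigenvalues W \<Longrightarrow> poly p \<mu> = 0"
    and xy: "x \<in> {0..1}" "y \<in> {0..1}"
  shows "op_poly_kernel (graphon_kernel W) p x y = 0"
proof -
  let ?Kp = "op_poly_kernel (graphon_kernel W) p"
  have f: "L2_unit (?Kp x)" by (rule op_poly_kernel_row_L2[OF kernel])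
  let ?g = "op_poly (integral_op (graphon_kernel W)) p (?Kp x)"
  have "L2_unit ?g" using bounded_linear_L2_op.maps_into[OF T.op_poly_bounded_linear] f by blast
  have hol: "holder_on_real \<beta> (M * norm_L2 ?g) Q (integral_op ?Kp (?Kp x))" if "Q \<in> P" for Q
    unfolding integral_op_op_poly[OF kernel f, symmetric]
    by (rule integral_op_holder[OF kernel \<open>L2_unit ?g\<close> kernel_holder[OF that] constant_nonneg])
  have "M * norm_L2 ?g \<ge> 0" using constant_nonneg norm_L2_nonneg[of ?g] by simp
  then have "integral_op ?Kp (?Kp x) x = 0"
    by (rule piecewise_holder_zero[OF _ hol eigenvalue_poly_annihilates_AE[OF vanish f] xy(1)])
  moreover have "integral_op ?Kp (?Kp x) x = (norm_L2 (?Kp x))\<^sup>2"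
    by (simp add: integral_op_def norm_L2_power2 inner_L2_def)
  ultimately have AE_row: "AE y in lborel. ?Kp x y = 0"
    using norm_L2_eq_0_iff_AE[OF f] by simp
  have hol_row: "holder_on_real \<beta> (\<Sum>k\<le>degree p. \<bar>coeff p k\<bar> * M) Q (?Kp x)" if "Q \<in> P" for Q
    using kernel_holder[OF that] graphon_kernel_commute[OF graphon]
    by (intro op_poly_kernel_column_holder[OF kernel constant_nonneg]) auto
  have "(\<Sum>k\<le>degree p. \<bar>coeff p k\<bar> * M) \<ge> 0" using constant_nonneg by (simp add: sum_nonneg)
  then show ?thesis by (rule piecewise_holder_zero[OF _ hol_row AE_row xy(2)])
qed

end

lemma holder_by_parts_imp_holder_graphon:
  assumes "graphon W" "holder_by_parts W"
  obtains P \<beta> M where "holder_graphon W P \<beta> M"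
proof -
  obtain P \<beta> M where P: "finite P" "\<Union>P = {0..1}"
    and parts: "\<And>Q. Q \<in> P \<Longrightarrow> connected Q \<and> emeasure lborel (interior Q) > 0"
    and "\<beta> > 0" and hol: "\<And>Qa Qb. Qa \<in> P \<Longrightarrow> Qb \<in> P \<Longrightarrow> holder_on \<beta> M (Qa \<times> Qb) W"
    using assms(2) unfolding holder_by_parts_def by metis
  have "holder_on_real \<beta> (max M 0) Q (\<lambda>x. graphon_kernel W x t)" if "Q \<in> P" for Q t
    unfolding holder_on_real_def
  proof (intro ballI)
    fix x x' assume "x \<in> Q" "x' \<in> Q"
    show "\<bar>graphon_kernel W x t - graphon_kernel W x' t\<bar> \<le> max M 0 * \<bar>x - x'\<bar> powr \<beta>"
    proof (cases "t \<in> {0..1}")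
      case True
      then obtain Qb where "Qb \<in> P" "t \<in> Qb" using P(2) by blast
      then have "\<bar>W x t - W x' t\<bar> \<le> M * \<bar>x - x'\<bar> powr \<beta>"
        using hol[OF that \<open>Qb \<in> P\<close>] \<open>x \<in> Q\<close> \<open>x' \<in> Q\<close>
        unfolding holder_on_def by (force simp: dist_Pair_Pair dist_real_def)
      moreover have "x \<in> {0..1}" "x' \<in> {0..1}" using P(2) that \<open>x \<in> Q\<close> \<open>x' \<in> Q\<close> by auto
      moreover have "M * \<bar>x - x'\<bar> powr \<beta> \<le> max M 0 * \<bar>x - x'\<bar> powr \<beta>"
        by (intro mult_right_mono) auto
      ultimately show ?thesis using True by (simp add: graphon_kernel_def)
    next
      case False
      then have "graphon_kernel W x t = 0" "graphon_kernel W x' t = 0"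
        by (auto simp: graphon_kernel_def)
      then show ?thesis by simp
    qed
  qed
  moreover have "is_interval Q" "interior Q \<noteq> {}" if "Q \<in> P" for Q
    using parts[OF that] is_interval_connected_1 by fastforce+
  ultimately have "holder_graphon W P \<beta> (max M 0)"
    using assms(1) P \<open>\<beta> > 0\<close> by unfold_locales auto
  then show ?thesis by (rule that)
qed

lemma graphon_moment_relation:
  assumes "(\<Sum>k\<le>n. a k * graphon_moment W (Suc k) x y) = 0" "a 0 \<noteq> 0"
  shows "W x y = (\<Sum>i=1..n. (- a i / a 0) * graphon_moment W (i + 1) x y)"
proof -
  have "{..n} = insert 0 {1..n}" by auto
  then have "a 0 * W x y + (\<Sum>i=1..n. a i * graphon_moment W (i + 1) x y) = 0"
    using assms(1) by simp
  then show ?thesis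
    using assms(2) by (simp add: sum_divide_distrib[symmetric] sum_negf field_simps)
qed

theorem proposition4p2:
  fixes W :: "real \<Rightarrow> real \<Rightarrow> real"
  assumes "graphon W"
    and "holder_by_parts W"
    and "finite (graphon_eigenvalues W)"
  shows "\<exists>\<beta> :: nat \<Rightarrow> real. \<forall>x\<in>{0..1}. \<forall>y\<in>{0..1}.
           W x y = (\<Sum>i=1..distinct_rank W. \<beta> i * graphon_moment W (i + 1) x y)"
proof -
  define p where "p = (\<Prod>\<mu>\<in>graphon_eigenvalues W. [:- \<mu>, 1:])"
  have deg: "degree p = distinct_rank W"
    unfolding p_def distinct_rank_def by (subst degree_prod_sum_eq) auto
  have coeff0: "coeff p 0 \<noteq> 0"
    using assms(3) unfolding p_def poly_0_coeff_0[symmetric] poly_prod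
    by (auto simp: graphon_eigenvalues_def)
  have vanish: "poly p \<mu> = 0" if "\<mu> \<in> graphon_eigenvalues W" for \<mu>
    using assms(3) that unfolding p_def poly_prod by auto
  obtain P \<beta> M where "holder_graphon W P \<beta> M"
    using holder_by_parts_imp_holder_graphon[OF assms(1,2)] by blast
  then have "op_poly_kernel (graphon_kernel W) p x y = 0" if "x \<in> {0..1}" "y \<in> {0..1}" for x y
    using holder_graphon.op_poly_kernel_vanishes vanish that by blast
  then have "(\<Sum>k\<le>distinct_rank W. coeff p k * graphon_moment W (Suc k) x y) = 0"
    if "x \<in> {0..1}" "y \<in> {0..1}" for x y
    using that graphon_moment_graphon_kernel[OF that, where W = W] deg unfolding op_poly_kernel_def by simp
  then have "W x y = (\<Sum>i=1..distinct_rank W. (- coeff p i / coeff p 0) * graphon_moment W (i + 1) x y)"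
    if "x \<in> {0..1}" "y \<in> {0..1}" for x y
    using graphon_moment_relation[where a = "coeff p", OF _ coeff0] that by blast
  then show ?thesis by (intro exI[of _ "\<lambda>i. - coeff p i / coeff p 0"]) blast
qed

end
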